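(* Let $n\ge1$, let $J:\mathbb{R}_{+}\to\mathbb{R}_{+}$ be continuous with $\int_{\mathbb{Q}_p^n}J(\|x\|_p)\,d^nx=1$, and assume $J(\|x\|_p)$ is of exponential type with exponent $\gamma$ satisfying $-n<\gamma<0$. Then $$\frac{\Omega(\|\xi\|_p)}{1-\widehat{J}(\|\xi\|_p)}\notin L^1(\mathbb{Q}_p^n,d^n\xi).$$
   Context: $p$ is a prime, $\|x\|_p=\max_i|x_i|_p$ on $\mathbb{Q}_p^n$, $d^nx$ is the Haar measure normalized so that $\mathbb{Z}_p^n$ has measure $1$, $\chi_p(y)=\exp(2\pi i\{y\}_p)$ is the standard additive character, and $\widehat{J}(\xi)=\int_{\mathbb{Q}_p^n}\chi_p(\xi\cdot x)J(\|x\|_p)\,d^nx$ (a radial function, written $\widehat{J}(\|\xi\|_p)$). $\Omega(\|\xi\|_p)$ is the characteristic function of $\mathbb{Z}_p^n=\{\|\xi\|_p\le1\}$. $J(\|x\|_p)$ is of exponential type if there exist positive constants $A,B,C_1$ and a real $\gamma>-n$ with $A\|x\|_p^{\gamma}e^{-C_1\|x\|_p}\le J(\|x\|_p)\le B\|x\|_p^{\gamma}e^{-C_1\|x\|_p}$ for all $x\in\mathbb{Q}_p^n$. *)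

theory Defs
  imports "HOL-Analysis.Analysis" "HOL-Computational_Algebra.Primes"
begin

text \<open>An element x of Q_p is represented by the sequence of its residues modulo p^k Z_p,
  k = 0,1,2,...: the k-th entry is the unique representative of x mod p^k Z_p in
  Z[1/p] intersected with [0, p^k).  The carrier padic p consists of compatible sequences
  with uniformly bounded p-power denominators; this is in bijection with Q_p.
  In particular x 0 is the p-adic fractional part of x.\<close>

definition qmod :: "rat \<Rightarrow> rat \<Rightarrow> rat" where
  "qmod r m = r - m * of_int \<lfloor>r / m\<rfloor>"

definition padic :: "nat \<Rightarrow> (nat \<Rightarrow> rat) set" where
  "padic p = {x. (\<forall>k. 0 \<le> x k \<and> x k < of_nat p ^ k \<and>
                        (\<exists>a::int. x (Suc k) - x k = of_int a * of_nat p ^ k)) \<and>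
                  (\<exists>e::nat. \<forall>k. \<exists>a::int. x k = of_int a / of_nat p ^ e)}"

definition pzero :: "nat \<Rightarrow> rat" where
  "pzero = (\<lambda>k. 0)"

definition padd :: "nat \<Rightarrow> (nat \<Rightarrow> rat) \<Rightarrow> (nat \<Rightarrow> rat) \<Rightarrow> nat \<Rightarrow> rat" where
  "padd p x y = (\<lambda>k. qmod (x k + y k) (of_nat p ^ k))"

definition psub :: "nat \<Rightarrow> (nat \<Rightarrow> rat) \<Rightarrow> (nat \<Rightarrow> rat) \<Rightarrow> nat \<Rightarrow> rat" where
  "psub p x y = (\<lambda>k. qmod (x k - y k) (of_nat p ^ k))"

text \<open>Least exponent e with p^e x in Z_p.\<close>
definition pden :: "nat \<Rightarrow> (nat \<Rightarrow> rat) \<Rightarrow> nat" where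
  "pden p x = (LEAST e. \<forall>k. \<exists>a::int. x k = of_int a / of_nat p ^ e)"

definition pmul :: "nat \<Rightarrow> (nat \<Rightarrow> rat) \<Rightarrow> (nat \<Rightarrow> rat) \<Rightarrow> nat \<Rightarrow> rat" where
  "pmul p x y = (\<lambda>k. let K = k + pden p x + pden p y
                     in qmod (x K * y K) (of_nat p ^ k))"

text \<open>x lies in p^j Z_p (j an integer).\<close>
definition in_pball :: "nat \<Rightarrow> int \<Rightarrow> (nat \<Rightarrow> rat) \<Rightarrow> bool" where
  "in_pball p j x \<longleftrightarrow> (\<forall>k. (int k \<le> j \<longrightarrow> x k = 0) \<and>
                              (\<exists>a::int. x k = of_int a * (of_nat p) powi j))"

definition pnorm :: "nat \<Rightarrow> (nat \<Rightarrow> rat) \<Rightarrow> real" where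
  "pnorm p x = Inf ((\<lambda>j. real p powr (- real_of_int j)) ` {j. in_pball p j x})"

definition pfrac :: "(nat \<Rightarrow> rat) \<Rightarrow> real" where
  "pfrac x = of_rat (x 0)"

definition chi :: "(nat \<Rightarrow> rat) \<Rightarrow> complex" where
  "chi y = exp (2 * of_real pi * \<i> * of_real (pfrac y))"

definition Qpn :: "nat \<Rightarrow> ('n \<Rightarrow> nat \<Rightarrow> rat) set" where
  "Qpn p = Pi UNIV (\<lambda>_. padic p)"

definition vnorm :: "nat \<Rightarrow> ('n::finite \<Rightarrow> nat \<Rightarrow> rat) \<Rightarrow> real" where
  "vnorm p x = Max (range (\<lambda>i. pnorm p (x i)))"

definition pdot :: "nat \<Rightarrow> ('n::finite \<Rightarrow> nat \<Rightarrow> rat) \<Rightarrow> ('n \<Rightarrow> nat \<Rightarrow> rat) \<Rightarrow> nat \<Rightarrow> rat" where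
  "pdot p \<xi> x = (\<lambda>k. qmod (\<Sum>i\<in>UNIV. pmul p (\<xi> i) (x i) k) (of_nat p ^ k))"

definition pballn :: "nat \<Rightarrow> ('n::finite \<Rightarrow> nat \<Rightarrow> rat) \<Rightarrow> int \<Rightarrow> ('n \<Rightarrow> nat \<Rightarrow> rat) set" where
  "pballn p c j = {x \<in> Qpn p. vnorm p (\<lambda>i. psub p (x i) (c i)) \<le> real p powr (- real_of_int j)}"

text \<open>Haar outer measure: infimum of total volumes of countable covers by balls,
  a ball of radius p^(-j) having volume p^(-j n); Z_p^n (j = 0) has volume 1.\<close>
definition haar_outer :: "nat \<Rightarrow> ('n::finite \<Rightarrow> nat \<Rightarrow> rat) set \<Rightarrow> ennreal" where
  "haar_outer p A =
     (INF C \<in> {C :: nat \<Rightarrow> ('n \<Rightarrow> nat \<Rightarrow> rat) \<times> int.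
                 (\<forall>m. fst (C m) \<in> Qpn p) \<and> A \<subseteq> (\<Union>m. pballn p (fst (C m)) (snd (C m)))}.
        \<Sum>m. ennreal (real p powr (- real CARD('n) * real_of_int (snd (C m)))))"

definition haar :: "nat \<Rightarrow> ('n::finite \<Rightarrow> nat \<Rightarrow> rat) measure" where
  "haar p = measure_of (Qpn p) {pballn p c j | c j. c \<in> Qpn p} (haar_outer p)"

definition fourierJ :: "nat \<Rightarrow> (real \<Rightarrow> real) \<Rightarrow> ('n::finite \<Rightarrow> nat \<Rightarrow> rat) \<Rightarrow> complex" where
  "fourierJ p J \<xi> = (\<integral>x. chi (pdot p \<xi> x) * complex_of_real (J (vnorm p x)) \<partial>haar p)"

end

theory Submission
  imports Defs
begin

text \<open>For \<xi> in p^m Z_p^n the character x \<mapsto> chi(\<xi>.x) is trivial on p^(-m) Z_p^n, so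
  |1 - Fourier(J)(\<xi>)| is at most twice the mass of J outside that ball, which the exponential
  decay of J makes O(p^(-(n+1)m)). Translation invariance of the Haar measure shows that
  Fourier(J)(\<xi>) \<noteq> 1 for \<xi> \<noteq> 0. Hence the integrand is at least c p^((n+1)m) on
  p^m Z_p^n, a set of measure p^(-nm) vol(Z_p^n), and its integral exceeds c' p^m for every m.\<close>

section \<open>Integer multiples and reduction modulo a rational\<close>

definition int_multiple :: "rat \<Rightarrow> rat \<Rightarrow> bool" where
  "int_multiple m a \<longleftrightarrow> (\<exists>z::int. a = of_int z * m)"

lemma int_multiple_add: "int_multiple m a \<Longrightarrow> int_multiple m b \<Longrightarrow> int_multiple m (a + b)"
  unfolding int_multiple_def by (metis distrib_right of_int_add)

lemma int_multiple_diff: "int_multiple m a \<Longrightarrow> int_multiple m b \<Longrightarrow> int_multiple m (a - b)"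
  unfolding int_multiple_def by (metis left_diff_distrib of_int_diff)

lemma int_multiple_minus: "int_multiple m a \<Longrightarrow> int_multiple m (- a)"
  unfolding int_multiple_def by (metis minus_mult_left of_int_minus)

lemma int_multiple_0 [simp]: "int_multiple m 0"
  unfolding int_multiple_def by (rule exI[of _ 0]) simp

lemma int_multiple_of_int_mult: "int_multiple m a \<Longrightarrow> int_multiple m (of_int z * a)"
  unfolding int_multiple_def by (metis mult.assoc of_int_mult)

lemma int_multiple_trans: "int_multiple m a \<Longrightarrow> int_multiple m' m \<Longrightarrow> int_multiple m' a"
  unfolding int_multiple_def by (metis mult.assoc of_int_mult)

lemma int_multiple_sum:
  "(\<And>i. i \<in> S \<Longrightarrow> int_multiple m (f i)) \<Longrightarrow> int_multiple m (\<Sum>i\<in>S. f i)"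
  by (induction S rule: infinite_finite_induct) (auto intro: int_multiple_add)

lemma int_multiple_1_iff: "int_multiple 1 r \<longleftrightarrow> (\<exists>z::int. r = of_int z)"
  unfolding int_multiple_def by simp

lemma int_multiple_power_le:
  "k \<le> k' \<Longrightarrow> int_multiple ((of_nat p::rat) ^ k) (of_nat p ^ k')"
  unfolding int_multiple_def
  by (rule exI[of _ "int p ^ (k' - k)"]) (simp add: power_add[symmetric])

lemma qmod_bounds:
  assumes "m > 0" shows "0 \<le> qmod r m" "qmod r m < m"
proof -
  have fl: "of_int \<lfloor>r/m\<rfloor> \<le> r/m" "r/m < of_int \<lfloor>r/m\<rfloor> + 1" by linarith+
  have "m * of_int \<lfloor>r/m\<rfloor> \<le> m * (r/m)" using fl(1) assms by (intro mult_left_mono) auto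
  then show "0 \<le> qmod r m" using assms by (simp add: qmod_def)
  have "m * (r/m) < m * (of_int \<lfloor>r/m\<rfloor> + 1)" using fl(2) assms by (intro mult_strict_left_mono) auto
  then show "qmod r m < m" using assms by (simp add: qmod_def algebra_simps)
qed

lemma int_multiple_qmod: "int_multiple m (r - qmod r m)"
  unfolding int_multiple_def qmod_def by (rule exI[of _ "\<lfloor>r/m\<rfloor>"]) simp

lemma qmod_unique:
  assumes "m > 0" "0 \<le> s" "s < m" "int_multiple m (r - s)" shows "qmod r m = s"
proof -
  obtain z where z: "r - s = of_int z * m" using assms(4) unfolding int_multiple_def by auto
  have "r / m = s / m + of_int z" using z assms(1) by (simp add: field_simps)
  moreover have "\<lfloor>s/m\<rfloor> = 0" using assms by (simp add: floor_eq_iff)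
  ultimately have "\<lfloor>r/m\<rfloor> = z" by simp
  then show ?thesis using z by (simp add: qmod_def algebra_simps)
qed

lemma qmod_cong:
  assumes "m > 0" "int_multiple m (r - r')" shows "qmod r m = qmod r' m"
  by (rule qmod_unique[OF assms(1) qmod_bounds[OF assms(1)]])
    (use int_multiple_add[OF assms(2) int_multiple_qmod[of m r']] in simp)

lemma qmod_eq_self: "m > 0 \<Longrightarrow> 0 \<le> r \<Longrightarrow> r < m \<Longrightarrow> qmod r m = r"
  by (rule qmod_unique) auto

lemma qmod_of_int_1: "qmod (of_int z) 1 = 0"
  by (rule qmod_unique) (auto simp: int_multiple_def)

lemma qmod_divide:
  assumes "m > 0" "d > 0" shows "qmod (r / d) m = qmod r (m * d) / d"
proof (rule qmod_unique[OF assms(1)])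
  have b: "0 \<le> qmod r (m*d)" "qmod r (m*d) < m * d" using qmod_bounds[of "m*d" r] assms by auto
  show "0 \<le> qmod r (m * d) / d" using b assms by simp
  show "qmod r (m * d) / d < m" using b assms by (simp add: divide_less_eq)
  obtain z where "r - qmod r (m*d) = of_int z * (m * d)"
    using int_multiple_qmod[of "m*d" r] unfolding int_multiple_def by blast
  then have "r / d - qmod r (m * d) / d = of_int z * m" using assms
    by (simp add: diff_divide_distrib[symmetric] field_simps)
  then show "int_multiple m (r / d - qmod r (m * d) / d)" unfolding int_multiple_def by blast
qed

section \<open>p-adic sequences, balls and norms\<close>

lemma padicD:
  assumes "x \<in> padic p"
  shows "0 \<le> x k" "x k < of_nat p ^ k" "int_multiple (of_nat p ^ k) (x (Suc k) - x k)"
    "\<exists>e::nat. \<forall>k. \<exists>a::int. x k = of_int a / of_nat p ^ e"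
  using assms unfolding padic_def int_multiple_def by auto

lemma padic_compat:
  assumes "x \<in> padic p" "k \<le> k'" shows "int_multiple (of_nat p ^ k) (x k' - x k)"
  using assms(2)
proof (induction k' rule: dec_induct)
  case (step m)
  have "int_multiple (of_nat p ^ k) (x (Suc m) - x m)"
    using int_multiple_trans[OF padicD(3)[OF assms(1)] int_multiple_power_le[OF step(1)]] .
  from int_multiple_add[OF this step(3)] show ?case by simp
qed simp

locale padic_numbers =
  fixes p :: nat
  assumes p_ge_2: "2 \<le> p"
begin

lemma p_gt_0 [simp]: "0 < p" and p_ne_0 [simp]: "p \<noteq> 0"
  using p_ge_2 by simp_all

lemma p_pos: "(0::rat) < of_nat p"
  by simp

lemma p_power_pos: "(0::rat) < of_nat p ^ k"
  by simp

lemma qmod_p_power_cong: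
  "int_multiple (of_nat p ^ k) (r - r') \<Longrightarrow> qmod r (of_nat p ^ k) = qmod r' (of_nat p ^ k)"
  by (rule qmod_cong) simp

lemma p_powi_of_nat: "(of_nat p::rat) powi (int k) = of_nat p ^ k"
  by (simp add: power_int_def)

lemma p_powi_minus_of_nat: "(of_nat p::rat) powi (- int k) = 1 / of_nat p ^ k"
  by (cases k) (simp_all add: power_int_def power_inverse field_simps nat_add_distrib)

lemma int_multiple_powi_le:
  assumes "j' \<le> j" shows "int_multiple ((of_nat p::rat) powi j') (of_nat p powi j)"
proof -
  have "(of_nat p::rat) powi j = of_nat p powi (j - j') * of_nat p powi j'"
    by (simp add: power_int_add[symmetric])
  also have "(of_nat p::rat) powi (j - j') = of_int (int p ^ nat (j - j'))"
    using assms by (simp add: power_int_def)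
  finally show ?thesis unfolding int_multiple_def by blast
qed

lemma int_multiple_powi_nonpos:
  "int_multiple 1 r \<Longrightarrow> j \<le> 0 \<Longrightarrow> int_multiple ((of_nat p::rat) powi j) r"
  using int_multiple_trans int_multiple_powi_le[of j 0] by auto

lemma padic_residue:
  assumes "x \<in> padic p" "k \<le> k'" shows "x k = qmod (x k') (of_nat p ^ k)"
  by (rule qmod_unique[symmetric]) (use padicD[OF assms(1)] padic_compat[OF assms] in auto)

lemma pden_spec:
  assumes "x \<in> padic p" shows "\<forall>k. \<exists>a::int. x k = of_int a / of_nat p ^ pden p x"
  unfolding pden_def by (rule LeastI_ex) (use padicD(4)[OF assms] in auto)

lemma pden_least:
  assumes "\<forall>k. \<exists>a::int. x k = of_int a / of_nat p ^ e" shows "pden p x \<le> e"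
  unfolding pden_def by (rule Least_le) (use assms in auto)

lemma in_pball_mono:
  assumes "in_pball p j x" "j' \<le> j" shows "in_pball p j' x"
  using assms int_multiple_trans[OF _ int_multiple_powi_le[OF assms(2)]]
  unfolding in_pball_def int_multiple_def[symmetric] by auto

lemma in_pball_of_nat_iff:
  assumes "x \<in> padic p" shows "in_pball p (int k) x \<longleftrightarrow> x k = 0"
proof
  assume "in_pball p (int k) x" then show "x k = 0" unfolding in_pball_def by auto
next
  assume xk: "x k = 0"
  have "int_multiple (of_nat p powi int k) (x l)" for l
  proof (cases "l \<le> k")
    case True
    then show ?thesis using padic_residue[OF assms True] xk by (simp add: qmod_def)
  next
    case False
    then show ?thesis using padic_compat[OF assms, of k l] xk by (simp add: p_powi_of_nat)
  qed
  moreover have "int l \<le> int k \<Longrightarrow> x l = 0" for l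
    using padic_residue[OF assms, of l k] xk by (simp add: qmod_def)
  ultimately show "in_pball p (int k) x" unfolding in_pball_def int_multiple_def by auto
qed

lemma in_pball_ex:
  assumes "x \<in> padic p" shows "\<exists>j. in_pball p j x"
proof -
  obtain e where e: "\<forall>k. \<exists>a::int. x k = of_int a / of_nat p ^ e" using padicD(4)[OF assms] by blast
  have pw: "(of_nat p::rat) powi (- int (Suc e)) = 1 / (of_nat p ^ e * of_nat p)"
    by (simp add: power_int_def nat_add_distrib power_inverse field_simps)
  have "int_multiple (of_nat p powi (- int (Suc e))) (x k)" for k
  proof -
    obtain a where "x k = of_int a / of_nat p ^ e" using e by blast
    then have "x k = of_int (a * int p) * (1 / (of_nat p ^ e * of_nat p))"
      by (simp add: field_simps)
    then show ?thesis unfolding int_multiple_def pw by blast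
  qed
  then show ?thesis unfolding in_pball_def int_multiple_def
    by (intro exI[of _ "- int (Suc e)"]) auto
qed

lemma pnorm_le_iff:
  assumes "x \<in> padic p"
  shows "pnorm p x \<le> real p powr (- real_of_int j) \<longleftrightarrow> in_pball p j x"
proof
  assume "in_pball p j x"
  then show "pnorm p x \<le> real p powr (- real_of_int j)" unfolding pnorm_def
    by (intro cInf_lower) (auto intro!: bdd_belowI[of _ 0])
next
  assume le: "pnorm p x \<le> real p powr (- real_of_int j)"
  show "in_pball p j x"
  proof (rule ccontr)
    assume notj: "\<not> in_pball p j x"
    have "real p * real p powr (- real_of_int j) \<le> pnorm p x" unfolding pnorm_def
    proof (rule cInf_greatest)
      show "(\<lambda>j. real p powr - real_of_int j) ` {j. in_pball p j x} \<noteq> {}"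
        using in_pball_ex[OF assms] by auto
    next
      fix y assume "y \<in> (\<lambda>j. real p powr - real_of_int j) ` {j. in_pball p j x}"
      then obtain j' where j': "in_pball p j' x" "y = real p powr - real_of_int j'" by auto
      have "j' < j" using in_pball_mono[OF j'(1), of j] notj by (meson not_le order_less_imp_le)
      then have "real p powr (- real_of_int j + 1) \<le> y"
        unfolding j'(2) using p_ge_2 by (intro powr_mono) auto
      moreover have "real p powr (- real_of_int j + 1) = real p * real p powr (- real_of_int j)"
        using p_ge_2 powr_add[of "real p" "- real_of_int j" 1] by (simp add: mult.commute)
      ultimately show "real p * real p powr - real_of_int j \<le> y" by simp
    qed
    moreover have "real p powr (- real_of_int j) < real p * real p powr (- real_of_int j)"
      using p_ge_2 by simp
    ultimately show False using le by linarith
  qed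
qed

lemma pnorm_pos:
  assumes "x \<in> padic p" "x \<noteq> pzero" shows "0 < pnorm p x"
proof (rule ccontr)
  assume "\<not> 0 < pnorm p x"
  then have "in_pball p (int k) x" for k
  proof -
    have "0 < real p powr - real k" by simp
    then have "pnorm p x \<le> real p powr - real k"
      using \<open>\<not> 0 < pnorm p x\<close> by linarith
    then show ?thesis using pnorm_le_iff[OF assms(1), of "int k"] by simp
  qed
  then have "x k = 0" for k using in_pball_of_nat_iff[OF assms(1)] by blast
  then show False using assms(2) unfolding pzero_def by auto
qed

lemma mem_Qpn_iff: "x \<in> Qpn p \<longleftrightarrow> (\<forall>i. x i \<in> padic p)"
  unfolding Qpn_def by auto

lemma pnorm_le_vnorm: "pnorm p (x i) \<le> vnorm p (x::'n::finite \<Rightarrow> nat \<Rightarrow> rat)"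
  unfolding vnorm_def by (rule Max_ge) auto

lemma vnorm_le_iff:
  assumes "(x::'n::finite \<Rightarrow> nat \<Rightarrow> rat) \<in> Qpn p"
  shows "vnorm p x \<le> real p powr (- real_of_int j) \<longleftrightarrow> (\<forall>i. in_pball p j (x i))"
  unfolding vnorm_def using assms pnorm_le_iff by (auto simp: mem_Qpn_iff)

lemma vnorm_pos:
  "(x::'n::finite \<Rightarrow> nat \<Rightarrow> rat) \<in> Qpn p \<Longrightarrow> x \<noteq> (\<lambda>i. pzero) \<Longrightarrow> 0 < vnorm p x"
  using pnorm_le_vnorm[of x] pnorm_pos by (meson mem_Qpn_iff order_less_le_trans)

definition p_fraction :: "nat \<Rightarrow> rat \<Rightarrow> bool" where
  "p_fraction e r \<longleftrightarrow> int_multiple (1 / of_nat p ^ e) r"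

lemma p_fraction_iff: "p_fraction e r \<longleftrightarrow> (\<exists>a::int. r = of_int a / of_nat p ^ e)"
  unfolding p_fraction_def int_multiple_def by (auto simp: field_simps)

lemma p_fraction_mono:
  assumes "p_fraction e r" "e \<le> e'" shows "p_fraction e' r"
proof -
  obtain a where a: "r = of_int a / of_nat p ^ e" using assms(1) p_fraction_iff by blast
  have "(of_nat p::rat) ^ e' = of_nat p ^ e * of_nat p ^ (e' - e)"
    using assms(2) by (simp add: power_add[symmetric])
  then have "r = of_int (a * int p ^ (e' - e)) / of_nat p ^ e'"
    unfolding a by simp
  then show ?thesis using p_fraction_iff by blast
qed

lemma p_fraction_of_int: "p_fraction e (of_int z)"
  unfolding p_fraction_iff by (auto intro!: exI[of _ "z * int p ^ e"] simp: field_simps)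

lemma p_fraction_if_int_multiple: "int_multiple (of_nat p ^ k) r \<Longrightarrow> p_fraction e r"
  unfolding int_multiple_def using p_fraction_of_int
  by (metis of_int_mult of_int_of_nat_eq of_nat_power)

lemma padicI:
  assumes "\<And>k. 0 \<le> y k" "\<And>k. y k < of_nat p ^ k"
    "\<And>k. int_multiple (of_nat p ^ k) (y (Suc k) - y k)" "\<And>k. p_fraction e (y k)"
  shows "y \<in> padic p"
  using assms p_fraction_iff unfolding padic_def int_multiple_def by fast

lemma padic_p_fraction: "x \<in> padic p \<Longrightarrow> \<exists>e. \<forall>k. p_fraction e (x k)"
  using padicD(4) p_fraction_iff by blast

lemma padic_linear_comb:
  assumes x: "x \<in> padic p" and c: "c \<in> padic p"
  shows "(\<lambda>k. qmod (x k + of_int s * c k) (of_nat p ^ k)) \<in> padic p"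
proof -
  define u where "u = (\<lambda>k. x k + of_int s * c k)"
  define y where "y = (\<lambda>k. qmod (u k) (of_nat p ^ k))"
  obtain e1 where e1: "\<And>k. p_fraction e1 (x k)" using padic_p_fraction[OF x] by blast
  obtain e2 where e2: "\<And>k. p_fraction e2 (c k)" using padic_p_fraction[OF c] by blast
  have "y \<in> padic p"
  proof (rule padicI)
    fix k
    show "0 \<le> y k" "y k < of_nat p ^ k" unfolding y_def using qmod_bounds[OF p_power_pos] by auto
    have u1: "int_multiple (of_nat p ^ k) (u (Suc k) - y (Suc k))"
      unfolding y_def using int_multiple_trans[OF int_multiple_qmod int_multiple_power_le[of k "Suc k"]]
      by simp
    have u0: "int_multiple (of_nat p ^ k) (u k - y k)"
      unfolding y_def by (rule int_multiple_qmod)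
    have "int_multiple (of_nat p ^ k) (u (Suc k) - u k)"
      unfolding u_def using int_multiple_add[OF padicD(3)[OF x]
        int_multiple_of_int_mult[OF padicD(3)[OF c], where z = s]] by (simp add: algebra_simps)
    from int_multiple_add[OF int_multiple_diff[OF this u1] u0]
    show "int_multiple (of_nat p ^ k) (y (Suc k) - y k)" by simp
    have "p_fraction (e1 + e2) (u k)"
      using p_fraction_mono[OF e1, of "e1+e2"] p_fraction_mono[OF e2, of "e1+e2"]
      unfolding u_def p_fraction_def by (auto intro: int_multiple_add int_multiple_of_int_mult)
    then show "p_fraction (e1 + e2) (y k)"
      using p_fraction_if_int_multiple[OF u0] int_multiple_diff unfolding p_fraction_def by fastforce
  qed
  then show ?thesis unfolding y_def u_def .
qed

lemma psub_padic: "x \<in> padic p \<Longrightarrow> c \<in> padic p \<Longrightarrow> psub p x c \<in> padic p"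
  using padic_linear_comb[of x c "-1"] unfolding psub_def by simp

lemma padd_padic: "x \<in> padic p \<Longrightarrow> c \<in> padic p \<Longrightarrow> padd p x c \<in> padic p"
  using padic_linear_comb[of x c 1] unfolding padd_def by simp

lemma pzero_padic: "pzero \<in> padic p"
  unfolding padic_def pzero_def by (auto intro!: exI[of _ 0])

lemma zero_in_Qpn: "(\<lambda>i. pzero) \<in> Qpn p"
  unfolding mem_Qpn_iff using pzero_padic by simp

lemma psub_pzero: "x \<in> padic p \<Longrightarrow> psub p x pzero = x"
  unfolding psub_def pzero_def using padicD(1,2) qmod_eq_self[OF p_power_pos] by fastforce

lemma psub_padd_cancel: "x \<in> padic p \<Longrightarrow> psub p (padd p x a) a = x"
proof
  fix k assume x: "x \<in> padic p"
  have "psub p (padd p x a) a k = qmod (x k) (of_nat p ^ k)" unfolding psub_def padd_def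
    by (rule qmod_p_power_cong)
      (use int_multiple_minus[OF int_multiple_qmod[of _ "x k + a k"]] in \<open>simp add: algebra_simps\<close>)
  also have "\<dots> = x k" using qmod_eq_self[OF p_power_pos] padicD(1,2)[OF x] by blast
  finally show "psub p (padd p x a) a k = x k" .
qed

lemma psub_psub_cancel: "psub p (psub p x a) (psub p c a) = psub p x c"
proof
  fix k
  show "psub p (psub p x a) (psub p c a) k = psub p x c k" unfolding psub_def
    by (rule qmod_p_power_cong)
      (use int_multiple_diff[OF int_multiple_qmod[of _ "c k - a k"] int_multiple_qmod[of _ "x k - a k"]]
        in \<open>simp add: algebra_simps\<close>)
qed

lemma pballn_iff:
  assumes "c \<in> Qpn p"
  shows "x \<in> pballn p c j \<longleftrightarrow> x \<in> Qpn p \<and> (\<forall>i. in_pball p j (psub p (x i) (c i)))"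
proof -
  have "x \<in> Qpn p \<Longrightarrow> (\<lambda>i. psub p (x i) (c i)) \<in> Qpn p"
    using assms psub_padic by (auto simp: mem_Qpn_iff)
  then show ?thesis unfolding pballn_def using vnorm_le_iff by auto
qed

lemma pballn_of_nat_iff:
  assumes c: "c \<in> Qpn p"
  shows "x \<in> pballn p c (int k) \<longleftrightarrow> x \<in> Qpn p \<and> (\<forall>i. x i k = c i k)"
proof -
  have "psub p (x i) (c i) k = 0 \<longleftrightarrow> x i k = c i k" if x: "x \<in> Qpn p" for i
  proof
    have xc: "x i \<in> padic p" "c i \<in> padic p" using x c by (auto simp: mem_Qpn_iff)
    assume "psub p (x i) (c i) k = 0"
    then have "int_multiple (of_nat p ^ k) (x i k - c i k)"
      using int_multiple_qmod[of "of_nat p ^ k" "x i k - c i k"] unfolding psub_def by simp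
    then have "qmod (x i k) (of_nat p ^ k) = qmod (c i k) (of_nat p ^ k)" by (rule qmod_p_power_cong)
    then show "x i k = c i k" using padic_residue[OF xc(1) order_refl] padic_residue[OF xc(2) order_refl]
      by simp
  qed (simp add: psub_def qmod_def)
  then show ?thesis
    using in_pball_of_nat_iff psub_padic c unfolding pballn_iff[OF c] by (auto simp: mem_Qpn_iff)
qed

definition pball0 :: "int \<Rightarrow> ('n::finite \<Rightarrow> nat \<Rightarrow> rat) set" where
  "pball0 j = pballn p (\<lambda>i. pzero) j"

lemma mem_pball0_iff: "x \<in> pball0 j \<longleftrightarrow> x \<in> Qpn p \<and> (\<forall>i. in_pball p j (x i))"
  unfolding pball0_def pballn_iff[OF zero_in_Qpn] using psub_pzero by (auto simp: mem_Qpn_iff)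

lemma mem_pball0_vnorm_iff:
  "x \<in> pball0 j \<longleftrightarrow> x \<in> Qpn p \<and> vnorm p x \<le> real p powr (- real_of_int j)"
  using mem_pball0_iff vnorm_le_iff by blast

lemma pball0_antimono: "j' \<le> j \<Longrightarrow> pball0 j \<subseteq> pball0 j'"
  by (auto simp: mem_pball0_iff) (meson in_pball_mono)

lemma zero_in_pball0: "(\<lambda>i. pzero) \<in> pball0 j"
  unfolding mem_pball0_iff using zero_in_Qpn by (auto simp: in_pball_def pzero_def)

lemma Qpn_eq_Union_pball0: "(Qpn p :: ('n::finite \<Rightarrow> nat \<Rightarrow> rat) set) = (\<Union>k::nat. pball0 (- int k))"
proof safe
  fix x :: "'n \<Rightarrow> nat \<Rightarrow> rat" assume x: "x \<in> Qpn p"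
  have "\<exists>j. in_pball p j (x i)" for i using in_pball_ex x by (auto simp: mem_Qpn_iff)
  then obtain jf where jf: "\<And>i. in_pball p (jf i) (x i)" by metis
  define k where "k = nat (- Min (range jf))"
  have "- int k \<le> jf i" for i
  proof -
    have "Min (range jf) \<le> jf i" by (rule Min_le) simp_all
    then show ?thesis unfolding k_def by linarith
  qed
  then have "x \<in> pball0 (- int k)" using jf in_pball_mono x unfolding mem_pball0_iff by blast
  then show "x \<in> (\<Union>k. pball0 (- int k))" by blast
qed (auto simp: mem_pball0_iff)

lemma pden_le_if_mem_pball0: "x \<in> pball0 (- int e) \<Longrightarrow> pden p (x i) \<le> e"
  by (rule pden_least) (auto simp: mem_pball0_iff in_pball_def p_powi_minus_of_nat)

lemma pball0_0_eq: "pball0 0 = {\<eta> \<in> Qpn p. vnorm p \<eta> \<le> 1}"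
  using mem_pball0_vnorm_iff[of _ 0] by auto

lemma p_power_lt_vnorm_if_notin_pball0:
  assumes "x \<in> Qpn p" "x \<notin> pball0 (- int j)" shows "real p ^ j < vnorm p x"
  using assms mem_pball0_vnorm_iff[of x "- int j"] by (simp add: powr_realpow)

section \<open>Division by p and translations\<close>

text \<open>In the residue-sequence model of Q_p, div_p y and mult_p y represent y/p and p y.\<close>

definition div_p :: "(nat \<Rightarrow> rat) \<Rightarrow> nat \<Rightarrow> rat" where
  "div_p y = (\<lambda>k. y (Suc k) / of_nat p)"

definition mult_p :: "(nat \<Rightarrow> rat) \<Rightarrow> nat \<Rightarrow> rat" where
  "mult_p y = (\<lambda>k. if k = 0 then qmod (of_nat p * y 0) 1 else of_nat p * y (k - 1))"

lemma div_p_padic: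
  assumes y: "y \<in> padic p" shows "div_p y \<in> padic p"
proof -
  obtain e where e: "\<And>k. p_fraction e (y k)" using padic_p_fraction[OF y] by blast
  show ?thesis
  proof (rule padicI)
    fix k
    show "0 \<le> div_p y k" using padicD(1)[OF y] unfolding div_p_def by simp
    show "div_p y k < of_nat p ^ k" using padicD(2)[OF y, of "Suc k"] unfolding div_p_def
      by (simp add: divide_less_eq mult.commute)
    obtain z where z: "y (Suc (Suc k)) - y (Suc k) = of_int z * of_nat p ^ Suc k"
      using padicD(3)[OF y, of "Suc k"] unfolding int_multiple_def by blast
    have "div_p y (Suc k) - div_p y k = of_int z * of_nat p ^ k" unfolding div_p_def
      using z p_pos by (simp add: field_simps diff_divide_distrib[symmetric])
    then show "int_multiple (of_nat p ^ k) (div_p y (Suc k) - div_p y k)"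
      unfolding int_multiple_def by blast
    obtain a where a: "y (Suc k) = of_int a / of_nat p ^ e" using e p_fraction_iff by blast
    have "div_p y k = of_int a / of_nat p ^ Suc e" unfolding div_p_def a by (simp add: field_simps)
    then show "p_fraction (Suc e) (div_p y k)" using p_fraction_iff by blast
  qed
qed

lemma mult_p_padic:
  assumes y: "y \<in> padic p" shows "mult_p y \<in> padic p"
proof -
  obtain e where e: "\<And>k. p_fraction e (y k)" using padic_p_fraction[OF y] by blast
  have py: "p_fraction e (of_nat p * y j)" for j
    using e[of j] int_multiple_of_int_mult[where z = "int p"] unfolding p_fraction_def by simp
  show ?thesis
  proof (rule padicI)
    fix k
    show "0 \<le> mult_p y k" using padicD(1)[OF y] qmod_bounds[of 1] unfolding mult_p_def by simp
    show "mult_p y k < of_nat p ^ k"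
      using padicD(2)[OF y, of "k - 1"] qmod_bounds[of 1]
      by (cases k) (simp_all add: mult_p_def)
    show "int_multiple (of_nat p ^ k) (mult_p y (Suc k) - mult_p y k)"
    proof (cases k)
      case 0 then show ?thesis using int_multiple_qmod[of 1 "of_nat p * y 0"] unfolding mult_p_def by simp
    next
      case (Suc k')
      obtain z where "y (Suc k') - y k' = of_int z * of_nat p ^ k'"
        using padicD(3)[OF y, of k'] unfolding int_multiple_def by blast
      then have "mult_p y (Suc k) - mult_p y k = of_int z * of_nat p ^ k"
        unfolding mult_p_def using Suc by (simp add: algebra_simps)
      then show ?thesis unfolding int_multiple_def by blast
    qed
    show "p_fraction e (mult_p y k)"
    proof (cases k)
      case 0
      have "int_multiple (of_nat p ^ 0) (of_nat p * y 0 - qmod (of_nat p * y 0) 1)"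
        using int_multiple_qmod[of 1] by simp
      from int_multiple_diff[OF py[of 0, unfolded p_fraction_def] p_fraction_if_int_multiple[OF this,
            unfolded p_fraction_def]]
      show ?thesis unfolding mult_p_def p_fraction_def using 0 by simp
    qed (use py in \<open>simp add: mult_p_def\<close>)
  qed
qed

lemma div_p_mult_p: "div_p (mult_p y) = y"
  unfolding div_p_def mult_p_def by auto

lemma psub_div_p: "psub p (div_p x) (div_p c) = div_p (psub p x c)"
proof
  fix k
  have "psub p (div_p x) (div_p c) k = qmod ((x (Suc k) - c (Suc k)) / of_nat p) (of_nat p ^ k)"
    unfolding psub_def div_p_def by (simp add: diff_divide_distrib)
  also have "\<dots> = div_p (psub p x c) k"
    unfolding div_p_def psub_def using qmod_divide[OF p_power_pos p_pos] by (simp add: mult.commute)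
  finally show "psub p (div_p x) (div_p c) k = div_p (psub p x c) k" .
qed

lemma in_pball_div_p: "in_pball p j y \<Longrightarrow> in_pball p (j - 1) (div_p y)"
  using power_int_add[of "of_nat p::rat" "j - 1" 1]
  unfolding in_pball_def div_p_def by (auto simp: field_simps)

lemma in_pball_mult_p:
  assumes y: "y \<in> padic p" and yj: "in_pball p j y" shows "in_pball p (j + 1) (mult_p y)"
proof -
  have pj: "(of_nat p::rat) powi (j + 1) = of_nat p * of_nat p powi j"
    using power_int_add[of "of_nat p::rat" j 1] by (simp add: mult.commute)
  have zero: "\<And>k. int k \<le> j \<Longrightarrow> y k = 0" and mult: "\<And>k. int_multiple (of_nat p powi j) (y k)"
    using yj unfolding in_pball_def int_multiple_def by auto
  have p_mult: "int_multiple (of_nat p powi (j+1)) (of_nat p * y k)" for k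
    using mult[of k] unfolding int_multiple_def pj by (auto simp: algebra_simps)
  have "(int k \<le> j + 1 \<longrightarrow> mult_p y k = 0) \<and> int_multiple (of_nat p powi (j+1)) (mult_p y k)" for k
  proof (cases k)
    case 0
    show ?thesis
    proof (cases "0 \<le> j + 1")
      case True
      have "int_multiple 1 (of_nat p * y 0)"
        using p_mult[of 0] int_multiple_trans[OF _ int_multiple_powi_le[OF True]] by simp
      then have "qmod (of_nat p * y 0) 1 = 0" by (intro qmod_unique) auto
      then show ?thesis using 0 by (simp add: mult_p_def)
    next
      case False
      have "int_multiple (of_nat p powi (j+1)) (of_nat p * y 0 - qmod (of_nat p * y 0) 1)"
        using int_multiple_powi_nonpos[OF int_multiple_qmod] False by simp
      from int_multiple_diff[OF p_mult[of 0] this] show ?thesis using 0 False by (simp add: mult_p_def)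
    qed
  next
    case (Suc k')
    then show ?thesis using zero[of k'] p_mult[of k'] by (simp add: mult_p_def)
  qed
  then show ?thesis unfolding in_pball_def int_multiple_def by blast
qed

definition vdiv_p :: "('n \<Rightarrow> nat \<Rightarrow> rat) \<Rightarrow> 'n \<Rightarrow> nat \<Rightarrow> rat" where
  "vdiv_p x = (\<lambda>i. div_p (x i))"

definition vadd :: "('n \<Rightarrow> nat \<Rightarrow> rat) \<Rightarrow> ('n \<Rightarrow> nat \<Rightarrow> rat) \<Rightarrow> 'n \<Rightarrow> nat \<Rightarrow> rat" where
  "vadd x a = (\<lambda>i. padd p (x i) (a i))"

definition vsub :: "('n \<Rightarrow> nat \<Rightarrow> rat) \<Rightarrow> ('n \<Rightarrow> nat \<Rightarrow> rat) \<Rightarrow> 'n \<Rightarrow> nat \<Rightarrow> rat" where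
  "vsub x a = (\<lambda>i. psub p (x i) (a i))"

lemma vdiv_p_Qpn: "x \<in> Qpn p \<Longrightarrow> vdiv_p x \<in> Qpn p"
  unfolding vdiv_p_def mem_Qpn_iff using div_p_padic by auto

lemma vadd_Qpn: "x \<in> Qpn p \<Longrightarrow> a \<in> Qpn p \<Longrightarrow> vadd x a \<in> Qpn p"
  unfolding vadd_def mem_Qpn_iff using padd_padic by auto

lemma vsub_Qpn: "x \<in> Qpn p \<Longrightarrow> a \<in> Qpn p \<Longrightarrow> vsub x a \<in> Qpn p"
  unfolding vsub_def mem_Qpn_iff using psub_padic by auto

lemma vsub_vadd_cancel: "x \<in> Qpn p \<Longrightarrow> vsub (vadd x a) a = x"
  unfolding vsub_def vadd_def using psub_padd_cancel by (auto simp: mem_Qpn_iff)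

lemma pball0_subset_vdiv_p_image: "pball0 j \<subseteq> vdiv_p ` pball0 (j + 1)"
proof
  fix x :: "'n::finite \<Rightarrow> nat \<Rightarrow> rat" assume x: "x \<in> pball0 j"
  define y where "y = (\<lambda>i. mult_p (x i))"
  have "y \<in> pball0 (j + 1)"
    using x unfolding mem_pball0_iff y_def mem_Qpn_iff using mult_p_padic in_pball_mult_p by auto
  moreover have "x = vdiv_p y" unfolding y_def vdiv_p_def div_p_mult_p by simp
  ultimately show "x \<in> vdiv_p ` pball0 (j + 1)" by blast
qed

lemma vdiv_p_pballn:
  assumes c: "c \<in> Qpn p" and x: "x \<in> pballn p c j" shows "vdiv_p x \<in> pballn p (vdiv_p c) (j - 1)"
  using x vdiv_p_Qpn in_pball_div_p
  unfolding pballn_iff[OF c] pballn_iff[OF vdiv_p_Qpn[OF c]] by (auto simp: vdiv_p_def psub_div_p)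

lemma vsub_pballn:
  assumes a: "a \<in> Qpn p" and c: "c \<in> Qpn p" and x: "x \<in> pballn p c j"
  shows "vsub x a \<in> pballn p (vsub c a) j"
  using x vsub_Qpn[OF _ a]
  unfolding pballn_iff[OF c] pballn_iff[OF vsub_Qpn[OF c a]] by (simp add: vsub_def psub_psub_cancel)

section \<open>The covering outer measure\<close>

lemma haar_outer_mono: "A \<subseteq> B \<Longrightarrow> haar_outer p A \<le> haar_outer p B"
  unfolding haar_outer_def by (rule INF_superset_mono) auto

lemma haar_outer_le_cover:
  assumes "\<forall>m. fst (C m) \<in> Qpn p" "A \<subseteq> (\<Union>m. pballn p (fst (C m)) (snd (C m)))"
  shows "haar_outer p (A :: ('n::finite \<Rightarrow> nat \<Rightarrow> rat) set)
    \<le> (\<Sum>m. ennreal (real p powr (- real CARD('n) * real_of_int (snd (C m)))))"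
  unfolding haar_outer_def by (rule INF_lower) (use assms in auto)

lemma haar_outer_greatest:
  assumes "\<And>C. \<forall>m. fst (C m) \<in> Qpn p \<Longrightarrow> A \<subseteq> (\<Union>m. pballn p (fst (C m)) (snd (C m))) \<Longrightarrow>
     y \<le> (\<Sum>m. ennreal (real p powr (- real CARD('n) * real_of_int (snd (C m)))))"
  shows "y \<le> haar_outer p (A :: ('n::finite \<Rightarrow> nat \<Rightarrow> rat) set)"
  unfolding haar_outer_def by (rule INF_greatest) (use assms in auto)

lemma haar_outer_image_le:
  fixes f :: "('n::finite \<Rightarrow> nat \<Rightarrow> rat) \<Rightarrow> 'n \<Rightarrow> nat \<Rightarrow> rat"
  assumes f_Qpn: "\<And>c. c \<in> Qpn p \<Longrightarrow> f c \<in> Qpn p"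
    and f_pballn: "\<And>c j x. c \<in> Qpn p \<Longrightarrow> x \<in> pballn p c j \<Longrightarrow> f x \<in> pballn p (f c) (j - d)"
  shows "ennreal (real p powr (- real CARD('n) * real_of_int d)) * haar_outer p (f ` A) \<le> haar_outer p A"
proof (rule haar_outer_greatest)
  fix C :: "nat \<Rightarrow> ('n \<Rightarrow> nat \<Rightarrow> rat) \<times> int"
  assume C: "\<forall>m. fst (C m) \<in> Qpn p" "A \<subseteq> (\<Union>m. pballn p (fst (C m)) (snd (C m)))"
  define n where "n = real CARD('n)"
  define C' where "C' = (\<lambda>m. (f (fst (C m)), snd (C m) - d))"
  have "\<forall>m. fst (C' m) \<in> Qpn p" using C(1) f_Qpn unfolding C'_def by auto
  moreover have "f ` A \<subseteq> (\<Union>m. pballn p (fst (C' m)) (snd (C' m)))"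
    using C f_pballn unfolding C'_def by fastforce
  ultimately have "haar_outer p (f ` A) \<le> (\<Sum>m. ennreal (real p powr (- n * real_of_int (snd (C' m)))))"
    unfolding n_def by (rule haar_outer_le_cover)
  then have "ennreal (real p powr (- n * real_of_int d)) * haar_outer p (f ` A)
      \<le> (\<Sum>m. ennreal (real p powr (- n * real_of_int d)) * ennreal (real p powr (- n * real_of_int (snd (C' m)))))"
    by (simp add: mult_left_mono)
  also have "\<dots> = (\<Sum>m. ennreal (real p powr (- n * real_of_int (snd (C m)))))"
    unfolding C'_def by (simp add: ennreal_mult[symmetric] powr_add[symmetric] algebra_simps)
  finally show "ennreal (real p powr (- n * real_of_int d)) * haar_outer p (f ` A)
      \<le> (\<Sum>m. ennreal (real p powr (- n * real_of_int (snd (C m)))))" .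
qed

lemma haar_outer_le_vadd_image:
  assumes a: "a \<in> Qpn p" and A: "A \<subseteq> Qpn p"
  shows "haar_outer p A \<le> haar_outer p ((\<lambda>x. vadd x a) ` (A :: ('n::finite \<Rightarrow> nat \<Rightarrow> rat) set))"
proof -
  have "A \<subseteq> (\<lambda>x. vsub x a) ` (\<lambda>x. vadd x a) ` A"
  proof
    fix x assume "x \<in> A"
    then show "x \<in> (\<lambda>x. vsub x a) ` (\<lambda>x. vadd x a) ` A"
      using A vsub_vadd_cancel[of x a] by (intro image_eqI[OF _ imageI]) auto
  qed
  then have "haar_outer p A \<le> haar_outer p ((\<lambda>x. vsub x a) ` (\<lambda>x. vadd x a) ` A)"
    by (rule haar_outer_mono)
  also have "\<dots> \<le> haar_outer p ((\<lambda>x. vadd x a) ` A)"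
    using haar_outer_image_le[where d = 0 and f = "\<lambda>x. vsub x a" and A = "(\<lambda>x. vadd x a) ` A"]
      vsub_Qpn[OF _ a] vsub_pballn[OF a] by simp
  finally show ?thesis .
qed

lemma haar_outer_pball0_Suc:
  "ennreal (real p powr (- real CARD('n))) * haar_outer p (pball0 j :: ('n::finite \<Rightarrow> nat \<Rightarrow> rat) set)
    \<le> haar_outer p (pball0 (j + 1) :: ('n \<Rightarrow> nat \<Rightarrow> rat) set)"
proof -
  let ?B = "pball0 (j + 1) :: ('n \<Rightarrow> nat \<Rightarrow> rat) set"
  have "ennreal (real p powr (- real CARD('n) * real_of_int 1)) * haar_outer p (vdiv_p ` ?B)
      \<le> haar_outer p ?B"
    by (rule haar_outer_image_le) (use vdiv_p_Qpn vdiv_p_pballn in auto)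
  moreover have "haar_outer p (pball0 j :: ('n \<Rightarrow> nat \<Rightarrow> rat) set) \<le> haar_outer p (vdiv_p ` ?B)"
    by (rule haar_outer_mono[OF pball0_subset_vdiv_p_image])
  ultimately show ?thesis by simp (meson mult_left_mono order_trans zero_le)
qed

lemma haar_outer_pball0_le:
  "haar_outer p (pball0 j :: ('n::finite \<Rightarrow> nat \<Rightarrow> rat) set)
    \<le> ennreal (2 * real p powr (- real CARD('n) * real_of_int j))"
proof -
  define c where "c = real p powr (- real CARD('n) * real_of_int j)"
  define q where "q = real p powr (- real CARD('n))"
  have c: "0 \<le> c" unfolding c_def by simp
  have q: "0 < q" "q \<le> 1/2"
  proof -
    show "0 < q" unfolding q_def by simp
    have "q \<le> real p powr (-1)" unfolding q_def using p_ge_2 by (intro powr_mono) auto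
    also have "\<dots> \<le> 1/2" using p_ge_2 by (simp add: powr_minus divide_simps)
    finally show "q \<le> 1/2" .
  qed
  define C where "C = (\<lambda>m::nat. ((\<lambda>i. pzero) :: 'n \<Rightarrow> nat \<Rightarrow> rat, j + int m))"
  have "haar_outer p (pball0 j :: ('n \<Rightarrow> nat \<Rightarrow> rat) set)
      \<le> (\<Sum>m. ennreal (real p powr (- real CARD('n) * real_of_int (snd (C m)))))"
  proof (rule haar_outer_le_cover)
    show "\<forall>m. fst (C m) \<in> Qpn p" unfolding C_def using zero_in_Qpn by simp
    show "pball0 j \<subseteq> (\<Union>m. pballn p (fst (C m)) (snd (C m)))"
      unfolding C_def pball0_def by (intro UN_upper[of 0, THEN subset_trans[rotated]]) auto
  qed
  also have "\<dots> = (\<Sum>m. ennreal (c * q ^ m))"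
  proof -
    have "real p powr (- real CARD('n) * real_of_int (j + int m)) = c * q ^ m" for m
      unfolding c_def q_def by (simp add: powr_power powr_add[symmetric] algebra_simps)
    then show ?thesis unfolding C_def by simp
  qed
  also have "\<dots> = ennreal (c * (1 / (1 - q)))"
    using c q by (simp add: suminf_ennreal2 summable_mult summable_geometric suminf_mult
        suminf_geometric[symmetric])
  also have "\<dots> \<le> ennreal (2 * c)"
    using c q mult_left_mono[of "1 / (1 - q)" 2 c] by (intro ennreal_leI) (simp add: field_simps)
  finally show ?thesis unfolding c_def .
qed

lemma pballn_subset_Qpn: "{pballn p c j | c j. c \<in> Qpn p} \<subseteq> Pow (Qpn p)"
  unfolding pballn_def by auto

lemma space_haar: "space (haar p) = Qpn p"
  unfolding haar_def using space_measure_of[OF pballn_subset_Qpn] .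

lemma sets_haar: "sets (haar p) = sigma_sets (Qpn p) {pballn p c j | c j. c \<in> Qpn p}"
  unfolding haar_def using sets_measure_of[OF pballn_subset_Qpn] .

lemma pballn_in_sets: "c \<in> Qpn p \<Longrightarrow> pballn p c j \<in> sets (haar p)"
  unfolding sets_haar by (rule sigma_sets.Basic) blast

lemma pball0_in_sets: "pball0 j \<in> sets (haar p)"
  unfolding pball0_def using pballn_in_sets[OF zero_in_Qpn] .

lemma emeasure_haar_trivial:
  assumes "\<not> measure_space (Qpn p) (sets (haar p :: ('n::finite \<Rightarrow> nat \<Rightarrow> rat) measure)) (haar_outer p)"
  shows "emeasure (haar p :: ('n \<Rightarrow> nat \<Rightarrow> rat) measure) A = 0"
  using assms unfolding sets_haar unfolding haar_def emeasure_measure_of_conv by auto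

lemma emeasure_haar:
  assumes "measure_space (Qpn p) (sets (haar p :: ('n::finite \<Rightarrow> nat \<Rightarrow> rat) measure)) (haar_outer p)"
    and "A \<in> sets (haar p :: ('n \<Rightarrow> nat \<Rightarrow> rat) measure)"
  shows "emeasure (haar p :: ('n \<Rightarrow> nat \<Rightarrow> rat) measure) A = haar_outer p A"
  using assms unfolding sets_haar unfolding haar_def emeasure_measure_of_conv by auto

end

section \<open>The additive character\<close>

lemma chi_eq: "chi y = exp (2 * of_real pi * \<i> * of_real (of_rat (y 0)))"
  unfolding chi_def pfrac_def ..

lemma norm_chi [simp]: "norm (chi y) = 1"
  unfolding chi_eq by simp

lemma Re_chi: "Re (chi y) = cos (2 * pi * of_rat (y 0))"
  unfolding chi_eq Re_exp by simp

lemma chi_eq_1: "y 0 = 0 \<Longrightarrow> chi y = 1"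
  unfolding chi_eq by simp

context padic_numbers
begin

lemma pmul_0_eq:
  assumes a: "a \<in> padic p" and b: "b \<in> padic p" and K: "pden p a + pden p b \<le> K"
  shows "pmul p a b 0 = qmod (a K * b K) 1"
proof -
  define ea eb where "ea = pden p a" and "eb = pden p b"
  define K0 where "K0 = ea + eb"
  obtain s where s: "a K = a K0 + of_int s * of_nat p ^ K0"
    using padic_compat[OF a, of K0 K] K unfolding K0_def ea_def eb_def int_multiple_def
    by (auto simp: algebra_simps)
  obtain t where t: "b K = b K0 + of_int t * of_nat p ^ K0"
    using padic_compat[OF b, of K0 K] K unfolding K0_def ea_def eb_def int_multiple_def
    by (auto simp: algebra_simps)
  obtain \<alpha> where \<alpha>: "a K0 = of_int \<alpha> / of_nat p ^ ea" using pden_spec[OF a] unfolding ea_def eb_def by blast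
  obtain \<beta> where \<beta>: "b K0 = of_int \<beta> / of_nat p ^ eb" using pden_spec[OF b] unfolding ea_def eb_def by blast
  have K0: "(of_nat p::rat) ^ K0 = of_nat p ^ ea * of_nat p ^ eb" unfolding K0_def by (simp add: power_add)
  have "a K * b K - a K0 * b K0 = of_int s * (of_nat p ^ K0 * b K0) + of_int t * (of_nat p ^ K0 * a K0)
      + of_int (s * t) * of_nat p ^ K0 * of_nat p ^ K0"
    unfolding s t by (simp add: algebra_simps)
  also have "of_nat p ^ K0 * b K0 = of_int (int p ^ ea * \<beta>)" unfolding K0 \<beta> by simp
  also have "of_nat p ^ K0 * a K0 = of_int (int p ^ eb * \<alpha>)" unfolding K0 \<alpha> by simp
  finally have "a K * b K - a K0 * b K0
      = of_int (s * (int p ^ ea * \<beta>) + t * (int p ^ eb * \<alpha>) + s * t * int p ^ K0 * int p ^ K0)"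
    by simp
  then have "int_multiple 1 (a K * b K - a K0 * b K0)" unfolding int_multiple_1_iff by blast
  then have "qmod (a K * b K) 1 = qmod (a K0 * b K0) 1" by (rule qmod_cong[rotated]) simp
  then show ?thesis unfolding pmul_def K0_def ea_def eb_def by (simp add: Let_def)
qed

lemma pdot_0_eq:
  assumes xi: "\<xi> \<in> Qpn p" and x: "x \<in> Qpn p" and N: "\<And>i. pden p (\<xi> i) + pden p (x i) \<le> N"
  shows "pdot p \<xi> x 0 = qmod (\<Sum>i\<in>UNIV. \<xi> i N * x i N) 1"
proof -
  have "pmul p (\<xi> i) (x i) 0 = qmod (\<xi> i N * x i N) 1" for i
    using pmul_0_eq xi x N by (simp add: mem_Qpn_iff)
  then have "pdot p \<xi> x 0 = qmod (\<Sum>i\<in>UNIV. qmod (\<xi> i N * x i N) 1) 1"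
    unfolding pdot_def by simp
  also have "\<dots> = qmod (\<Sum>i\<in>UNIV. \<xi> i N * x i N) 1"
  proof (rule qmod_cong)
    have "int_multiple 1 (\<Sum>i\<in>UNIV. qmod (\<xi> i N * x i N) 1 - \<xi> i N * x i N)"
      by (rule int_multiple_sum) (use int_multiple_minus[OF int_multiple_qmod] in simp)
    then show "int_multiple 1 ((\<Sum>i\<in>UNIV. qmod (\<xi> i N * x i N) 1) - (\<Sum>i\<in>UNIV. \<xi> i N * x i N))"
      by (simp add: sum_subtractf)
  qed simp
  finally show ?thesis .
qed

lemma pdot_0_bounds: "0 \<le> pdot p \<xi> x 0" "pdot p \<xi> x 0 < 1"
  unfolding pdot_def using qmod_bounds[of 1] by auto

lemma pdot_0_eq_0_if_dual:
  assumes xi: "\<xi> \<in> pball0 (int m)" and x: "x \<in> pball0 (- int m)"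
  shows "pdot p \<xi> x 0 = 0"
proof -
  define N where "N = (\<Sum>i\<in>UNIV. pden p (\<xi> i) + pden p (x i))"
  have "\<exists>z::int. \<xi> i N * x i N = of_int z" for i
  proof -
    obtain \<alpha> where \<alpha>: "\<xi> i N = of_int \<alpha> * of_nat p powi (int m)"
      using xi unfolding mem_pball0_iff in_pball_def by blast
    obtain \<beta> where \<beta>: "x i N = of_int \<beta> * of_nat p powi (- int m)"
      using x unfolding mem_pball0_iff in_pball_def by blast
    have "\<xi> i N * x i N = of_int (\<alpha> * \<beta>)" unfolding \<alpha> \<beta> by (simp add: power_int_def field_simps)
    then show ?thesis by blast
  qed
  then obtain z where z: "\<And>i. \<xi> i N * x i N = of_int (z i)" by metis
  have "pden p (\<xi> i) + pden p (x i) \<le> N" for i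
    unfolding N_def by (rule member_le_sum) auto
  then have "pdot p \<xi> x 0 = qmod (\<Sum>i\<in>UNIV. \<xi> i N * x i N) 1"
    using xi x unfolding mem_pball0_iff by (intro pdot_0_eq) auto
  also have "\<dots> = 0" unfolding z by (simp add: qmod_of_int_1 of_int_sum[symmetric] del: of_int_sum)
  finally show ?thesis .
qed

lemma p_power_mult_eq_of_int:
  assumes a: "a \<in> padic p" and N: "pden p a \<le> N" shows "\<exists>z::int. of_nat p ^ N * a N = of_int z"
proof -
  obtain \<alpha> where \<alpha>: "a N = of_int \<alpha> / of_nat p ^ pden p a" using pden_spec[OF a] by blast
  have "(of_nat p::rat) ^ N = of_nat p ^ (N - pden p a) * of_nat p ^ pden p a"
    using N by (simp add: power_add[symmetric])
  then have "of_nat p ^ N * a N = of_int (int p ^ (N - pden p a) * \<alpha>)" unfolding \<alpha> by simp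
  then show ?thesis by blast
qed

lemma pdot_0_vadd:
  assumes xi: "\<xi> \<in> Qpn p" and x: "x \<in> Qpn p" and a: "a \<in> Qpn p"
  shows "pdot p \<xi> (vadd x a) 0 = qmod (pdot p \<xi> x 0 + pdot p \<xi> a 0) 1"
proof -
  define y where "y = vadd x a"
  have y: "y \<in> Qpn p" unfolding y_def using vadd_Qpn a x by blast
  define N where "N = (\<Sum>i\<in>UNIV. pden p (\<xi> i) + pden p (x i) + pden p (a i) + pden p (y i))"
  have N: "pden p (\<xi> i) + pden p (x i) + pden p (a i) + pden p (y i) \<le> N" for i
    unfolding N_def by (rule member_le_sum) auto
  then have "pden p (\<xi> i) + pden p (x i) \<le> N" "pden p (\<xi> i) + pden p (a i) \<le> N"
    "pden p (\<xi> i) + pden p (y i) \<le> N" for i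
    using N[of i] by linarith+
  then have x_eq: "pdot p \<xi> x 0 = qmod (\<Sum>i\<in>UNIV. \<xi> i N * x i N) 1"
    and a_eq: "pdot p \<xi> a 0 = qmod (\<Sum>i\<in>UNIV. \<xi> i N * a i N) 1"
    and y_eq: "pdot p \<xi> y 0 = qmod (\<Sum>i\<in>UNIV. \<xi> i N * y i N) 1"
    using pdot_0_eq[OF xi] x a y by blast+
  have diff: "int_multiple 1 (\<xi> i N * y i N - (\<xi> i N * x i N + \<xi> i N * a i N))" for i
  proof -
    obtain z where z: "x i N + a i N - y i N = of_int z * of_nat p ^ N"
      using int_multiple_qmod[of "of_nat p ^ N" "x i N + a i N"]
      unfolding y_def vadd_def padd_def int_multiple_def by auto
    obtain w where w: "of_nat p ^ N * \<xi> i N = of_int w"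
      using p_power_mult_eq_of_int[of "\<xi> i" N] xi N[of i] by (auto simp: mem_Qpn_iff)
    have "\<xi> i N * y i N - (\<xi> i N * x i N + \<xi> i N * a i N) = - (\<xi> i N * (x i N + a i N - y i N))"
      by (simp add: algebra_simps)
    also have "\<dots> = - (of_int z * (of_nat p ^ N * \<xi> i N))"
      unfolding z by (simp add: algebra_simps)
    finally have "\<xi> i N * y i N - (\<xi> i N * x i N + \<xi> i N * a i N) = - (of_int z * (of_nat p ^ N * \<xi> i N))" .
    then show ?thesis unfolding w int_multiple_1_iff by (metis of_int_minus of_int_mult)
  qed
  let ?X = "\<Sum>i\<in>UNIV. \<xi> i N * x i N" and ?A = "\<Sum>i\<in>UNIV. \<xi> i N * a i N"
  have "int_multiple 1 ((\<Sum>i\<in>UNIV. \<xi> i N * y i N - (\<xi> i N * x i N + \<xi> i N * a i N))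
       + (?X - qmod ?X 1) + (?A - qmod ?A 1))"
    by (intro int_multiple_add int_multiple_sum diff int_multiple_qmod)
  then have "qmod (\<Sum>i\<in>UNIV. \<xi> i N * y i N) 1 = qmod (qmod ?X 1 + qmod ?A 1) 1"
    by (intro qmod_cong) (simp_all add: sum_subtractf sum.distrib algebra_simps)
  then show ?thesis using x_eq a_eq y_eq unfolding y_def by simp
qed

lemma padic_leading_digit:
  assumes y: "y \<in> padic p" and y0: "in_pball p 0 y" and nz: "y \<noteq> pzero"
  obtains v and \<alpha> :: int where "in_pball p (int v) y" "y (Suc v) = of_int \<alpha> * of_nat p ^ v"
    "0 < \<alpha>" "\<alpha> < int p"
proof -
  obtain k0 where k0: "y k0 \<noteq> 0" using nz unfolding pzero_def by auto
  define V where "V = {v::nat. in_pball p (int v) y}"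
  have V_bound: "v < k0" if "v \<in> V" for v
  proof (rule ccontr)
    assume "\<not> v < k0"
    then show False using that k0 unfolding V_def in_pball_def by auto
  qed
  have fin: "finite V" using V_bound by (meson finite_nat_set_iff_bounded)
  define v where "v = Max V"
  have vV: "v \<in> V"
    unfolding v_def by (intro Max_in[OF fin]) (use y0 in \<open>auto simp: V_def intro!: exI[of _ 0]\<close>)
  have "Suc v \<notin> V" using Max_ge[OF fin, of "Suc v"] unfolding v_def by auto
  then have ne: "y (Suc v) \<noteq> 0" using in_pball_of_nat_iff[OF y, of "Suc v"] unfolding V_def by simp
  obtain \<alpha> where \<alpha>: "y (Suc v) = of_int \<alpha> * of_nat p ^ v"
    using vV unfolding V_def in_pball_def p_powi_of_nat by blast
  have "0 < y (Suc v)" "y (Suc v) < of_nat p * of_nat p ^ v"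
    using padicD(1,2)[OF y, of "Suc v"] ne by auto
  then have "0 < \<alpha>" "\<alpha> < int p"
    unfolding \<alpha> by (simp_all add: zero_less_mult_iff mult_less_cancel_right_pos)
  with vV \<alpha> that show ?thesis unfolding V_def by blast
qed

lemma padic_inverse_power: "(\<lambda>k. 1 / of_nat p ^ Suc e) \<in> padic p"
proof (rule padicI)
  fix k
  have "(1::rat) < of_nat p ^ Suc e" using p_ge_2 by (intro one_less_power) auto
  then have "1 / (of_nat p ^ Suc e :: rat) < 1" by simp
  also have "1 \<le> (of_nat p ^ k :: rat)" using p_ge_2 by simp
  finally show "1 / of_nat p ^ Suc e < (of_nat p ^ k :: rat)" .
  show "p_fraction (Suc e) (1 / of_nat p ^ Suc e)" unfolding p_fraction_iff by (rule exI[of _ 1]) simp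
qed simp_all

text \<open>The witness has a single nonzero coordinate p^(-(v+1)), where p^v is the exact power of p
  dividing the corresponding coordinate of \<xi>.\<close>

lemma ex_pdot_0_ne_0:
  assumes xi: "\<xi> \<in> pball0 0" and nz: "\<xi> \<noteq> (\<lambda>i. pzero)"
  shows "\<exists>x \<in> Qpn p. pdot p \<xi> x 0 \<noteq> 0"
proof -
  have \<xi>: "\<xi> \<in> Qpn p" using xi mem_pball0_iff by auto
  obtain i where i: "\<xi> i \<noteq> pzero" using nz by auto
  have \<xi>i: "\<xi> i \<in> padic p" using \<xi> by (auto simp: mem_Qpn_iff)
  obtain v \<alpha> where v: "in_pball p (int v) (\<xi> i)" and \<alpha>: "\<xi> i (Suc v) = of_int \<alpha> * of_nat p ^ v"
    and \<alpha>_pos: "0 < \<alpha>" and \<alpha>_less: "\<alpha> < int p"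
    using padic_leading_digit[OF \<xi>i _ i] xi by (auto simp: mem_pball0_iff)
  define x where "x = (\<lambda>l. if l = i then (\<lambda>k. 1 / of_nat p ^ Suc v) else pzero)"
  have x: "x \<in> Qpn p" unfolding x_def mem_Qpn_iff using padic_inverse_power pzero_padic by auto
  define N where "N = (\<Sum>l\<in>UNIV. pden p (\<xi> l) + pden p (x l)) + Suc v"
  have "pden p (\<xi> l) + pden p (x l) \<le> N" for l
  proof -
    have "pden p (\<xi> l) + pden p (x l) \<le> (\<Sum>l\<in>UNIV. pden p (\<xi> l) + pden p (x l))"
      by (rule member_le_sum) auto
    then show ?thesis unfolding N_def by linarith
  qed
  then have "pdot p \<xi> x 0 = qmod (\<Sum>l\<in>UNIV. \<xi> l N * x l N) 1"
    by (rule pdot_0_eq[OF \<xi> x])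
  also have "(\<Sum>l\<in>UNIV. \<xi> l N * x l N) = \<xi> i N / of_nat p ^ Suc v"
    by (simp add: x_def pzero_def if_distrib[of "\<lambda>y. _ * y N"] sum.delta cong: if_cong)
  also have "qmod (\<xi> i N / of_nat p ^ Suc v) 1 = of_int \<alpha> / of_nat p"
  proof (rule qmod_unique)
    show "0 \<le> rat_of_int \<alpha> / rat_of_nat p" "rat_of_int \<alpha> / rat_of_nat p < 1"
      using \<alpha>_pos \<alpha>_less by (simp_all add: divide_less_eq)
    obtain s where s: "\<xi> i N = \<xi> i (Suc v) + of_int s * of_nat p ^ Suc v"
      using padic_compat[OF \<xi>i, of "Suc v" N] unfolding N_def int_multiple_def
      by (auto simp: algebra_simps)
    have "\<xi> i N / of_nat p ^ Suc v - of_int \<alpha> / of_nat p = of_int s"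
      unfolding s \<alpha> by (simp add: field_simps)
    then show "int_multiple 1 (\<xi> i N / of_nat p ^ Suc v - of_int \<alpha> / of_nat p)"
      unfolding int_multiple_1_iff by blast
  qed simp
  finally have "pdot p \<xi> x 0 \<noteq> 0" using \<alpha>_pos by simp
  then show ?thesis using x by blast
qed

lemma cylinder_in_sets:
  "{x \<in> Qpn p. \<forall>i. x i k = r i} \<in> sets (haar p :: ('n::finite \<Rightarrow> nat \<Rightarrow> rat) measure)"
proof (cases "\<exists>c \<in> (Qpn p :: ('n \<Rightarrow> nat \<Rightarrow> rat) set). \<forall>i. c i k = r i")
  case True
  then obtain c :: "'n \<Rightarrow> nat \<Rightarrow> rat" where c: "c \<in> Qpn p" "\<forall>i. c i k = r i" by blast
  then have "{x \<in> Qpn p. \<forall>i. x i k = r i} = pballn p c (int k)"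
    using pballn_of_nat_iff[OF c(1)] by auto
  then show ?thesis using pballn_in_sets[OF c(1)] by simp
next
  case False
  then have "{x \<in> Qpn p. \<forall>i. x i k = r i} = ({} :: ('n \<Rightarrow> nat \<Rightarrow> rat) set)" by auto
  then show ?thesis by (simp only: sets.empty_sets)
qed

text \<open>On each ball p^(-E) Z_p^n, the fractional part of the dot product with \<xi> is a
  function of the residues at one fixed level, so its level sets are countable unions of cylinders.\<close>

lemma pdot_0_level_set_in_sets:
  assumes xi: "(\<xi> :: 'n::finite \<Rightarrow> nat \<Rightarrow> rat) \<in> Qpn p"
  shows "{x \<in> Qpn p. pdot p \<xi> x 0 \<in> V} \<in> sets (haar p :: ('n \<Rightarrow> nat \<Rightarrow> rat) measure)"
proof -
  define N where "N = (\<lambda>E::nat. (\<Sum>i\<in>UNIV. pden p (\<xi> i)) + E)"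
  define h where "h = (\<lambda>E (r :: 'n \<Rightarrow> rat). qmod (\<Sum>i\<in>UNIV. \<xi> i (N E) * r i) 1)"
  have pdot_eq: "pdot p \<xi> x 0 = h E (\<lambda>i. x i (N E))" if x: "x \<in> pball0 (- int E)" for x E
    unfolding h_def
  proof (rule pdot_0_eq[OF xi])
    show "x \<in> Qpn p" using x mem_pball0_iff by auto
    fix i
    have "pden p (\<xi> i) \<le> (\<Sum>i\<in>UNIV. pden p (\<xi> i))" by (rule member_le_sum) auto
    then show "pden p (\<xi> i) + pden p (x i) \<le> N E"
      using pden_le_if_mem_pball0[OF x, of i] unfolding N_def by linarith
  qed
  have "{x \<in> Qpn p. pdot p \<xi> x 0 \<in> V} =
    (\<Union>E. \<Union>r\<in>{r. h E r \<in> V}. pball0 (- int E) \<inter> {x \<in> Qpn p. \<forall>i. x i (N E) = r i})"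
  proof (intro set_eqI iffI)
    fix x assume x: "x \<in> {x \<in> Qpn p. pdot p \<xi> x 0 \<in> V}"
    then obtain E where E: "x \<in> pball0 (- int E)" using Qpn_eq_Union_pball0 by blast
    then show "x \<in> (\<Union>E. \<Union>r\<in>{r. h E r \<in> V}. pball0 (- int E) \<inter> {x \<in> Qpn p. \<forall>i. x i (N E) = r i})"
      using pdot_eq[OF E] x by (intro UN_I[of E]) (auto intro!: UN_I[of "\<lambda>i. x i (N E)"])
  qed (auto simp: pdot_eq fun_eq_iff[symmetric])
  then show ?thesis
    by (simp only:) (intro sets.countable_UN'' sets.Int pball0_in_sets cylinder_in_sets; simp)
qed

lemma chi_pdot_measurable:
  assumes "(\<xi> :: 'n::finite \<Rightarrow> nat \<Rightarrow> rat) \<in> Qpn p"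
  shows "(\<lambda>x. chi (pdot p \<xi> x)) \<in> borel_measurable (haar p :: ('n \<Rightarrow> nat \<Rightarrow> rat) measure)"
proof (rule borel_measurableI)
  fix U :: "complex set"
  let ?g = "\<lambda>r. exp (2 * of_real pi * \<i> * of_real (of_rat r))"
  have "(\<lambda>x. chi (pdot p \<xi> x)) -` U \<inter> space (haar p :: ('n \<Rightarrow> nat \<Rightarrow> rat) measure)
      = {x \<in> Qpn p. pdot p \<xi> x 0 \<in> ?g -` U}"
    unfolding space_haar chi_eq by auto
  then show "(\<lambda>x. chi (pdot p \<xi> x)) -` U \<inter> space (haar p :: ('n \<Rightarrow> nat \<Rightarrow> rat) measure) \<in> sets (haar p)"
    using pdot_0_level_set_in_sets[OF assms, of "?g -` U"] by simp
qed

end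

section \<open>Haar measure\<close>

text \<open>The measure haar p is built with measure_of from the covering outer measure, which yields
  the zero measure unless that outer measure is countably additive on the generated sigma
  algebra. Nontriviality of haar p is therefore a hypothesis here; it is supplied later
  by the normalisation of the kernel.\<close>

locale haar_space = padic_numbers +
  fixes M :: "('n::finite \<Rightarrow> nat \<Rightarrow> rat) measure"
  assumes M_eq: "M = haar p"
    and emeasure_Qpn_ne_0: "emeasure M (Qpn p) \<noteq> 0"
begin

lemma space_M [simp]: "space M = Qpn p"
  unfolding M_eq by (rule space_haar)

lemma sets_M [measurable_cong]: "sets M = sets (haar p)"
  unfolding M_eq ..

lemma Qpn_in_sets_M [measurable]: "Qpn p \<in> sets M"
  using sets.top[of M] by simp

lemma pball0_in_sets_M [measurable]: "pball0 j \<in> sets M"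
  unfolding M_eq by (rule pball0_in_sets)

lemma emeasure_M: "A \<in> sets M \<Longrightarrow> emeasure M A = haar_outer p A"
proof -
  have "measure_space (Qpn p) (sets (haar p :: ('n \<Rightarrow> nat \<Rightarrow> rat) measure)) (haar_outer p)"
    using emeasure_haar_trivial emeasure_Qpn_ne_0 unfolding M_eq by blast
  then show "A \<in> sets M \<Longrightarrow> emeasure M A = haar_outer p A"
    unfolding M_eq by (rule emeasure_haar)
qed

lemma emeasure_pball0_le:
  "emeasure M (pball0 j) \<le> ennreal (2 * real p powr (- real CARD('n) * real_of_int j))"
  using emeasure_M haar_outer_pball0_le by simp

lemma emeasure_pball0_neg_le: "emeasure M (pball0 (- int j)) \<le> ennreal (2 * real p ^ (CARD('n) * j))"
  using emeasure_pball0_le[of "- int j"] by (simp add: powr_realpow[symmetric])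

lemma p_powr_card_mult: "real p powr (- real CARD('n) * real m) = (1 / real p) ^ (CARD('n) * m)"
proof -
  have "real p powr (- real CARD('n) * real m) = 1 / real p powr real (CARD('n) * m)"
    by (simp add: powr_minus_divide)
  also have "real p powr real (CARD('n) * m) = real p ^ (CARD('n) * m)"
    by (rule powr_realpow) simp
  finally show ?thesis by (simp add: power_one_over)
qed

lemma emeasure_pball0_ge:
  "ennreal ((1 / real p) ^ (CARD('n) * m)) * emeasure M (pball0 0) \<le> emeasure M (pball0 (int m))"
proof (induction m)
  case (Suc m)
  have "ennreal ((1 / real p) ^ (CARD('n) * Suc m)) * emeasure M (pball0 0)
      = ennreal (real p powr (- real CARD('n))) * (ennreal ((1 / real p) ^ (CARD('n) * m)) * emeasure M (pball0 0))"
    using p_powr_card_mult[of 1] by (simp add: ennreal_mult power_add mult_ac)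
  also have "\<dots> \<le> ennreal (real p powr (- real CARD('n))) * emeasure M (pball0 (int m))"
    using Suc by (intro mult_left_mono) auto
  also have "\<dots> \<le> emeasure M (pball0 (int m + 1))"
    using haar_outer_pball0_Suc emeasure_M by simp
  finally show ?case by (simp add: add.commute)
qed simp

lemma emeasure_pball0_0_ne_0: "emeasure M (pball0 0) \<noteq> 0"
proof
  assume null: "emeasure M (pball0 0) = 0"
  have "emeasure M (pball0 (- int k)) = 0" for k
  proof (induction k)
    case (Suc k)
    have "ennreal (real p powr (- real CARD('n))) * emeasure M (pball0 (- int (Suc k))) \<le> emeasure M (pball0 (- int k))"
      using haar_outer_pball0_Suc[of "- int (Suc k)"] emeasure_M by simp
    then show ?case using Suc by simp
  qed (use null in simp)
  then have "emeasure M (\<Union>k. pball0 (- int k)) = 0" by (intro emeasure_UN_eq_0) auto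
  then show False using emeasure_Qpn_ne_0 Qpn_eq_Union_pball0 by metis
qed

lemma emeasure_pball0_0_finite: "emeasure M (pball0 0) < \<infinity>"
  using emeasure_pball0_le[of 0] by (simp add: le_less_trans)

lemma singleton_zero_eq: "{\<lambda>i. pzero} = (\<Inter>m. pball0 (int m) :: ('n \<Rightarrow> nat \<Rightarrow> rat) set)"
proof (intro set_eqI iffI)
  fix x :: "'n \<Rightarrow> nat \<Rightarrow> rat" assume "x \<in> (\<Inter>m. pball0 (int m))"
  then have "x i k = pzero k" for i k
    using in_pball_of_nat_iff[of "x i" k] by (auto simp: mem_pball0_iff mem_Qpn_iff pzero_def)
  then show "x \<in> {\<lambda>i. pzero}" by auto
qed (use zero_in_pball0 in auto)

lemma singleton_zero_in_sets [measurable]: "{\<lambda>i. pzero} \<in> sets M"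
  unfolding singleton_zero_eq by (rule sets.countable_INT) auto

lemma emeasure_singleton_zero: "emeasure M {\<lambda>i. pzero} = 0"
proof -
  have "emeasure M {\<lambda>i. pzero} \<le> ennreal (2 * (1 / real p) ^ (CARD('n) * m))" for m
  proof -
    have "emeasure M {\<lambda>i. pzero} \<le> emeasure M (pball0 (int m))"
      by (rule emeasure_mono) (use zero_in_pball0 in auto)
    also have "\<dots> \<le> ennreal (2 * (1 / real p) ^ (CARD('n) * m))"
      using emeasure_pball0_le[of "int m"] p_powr_card_mult[of m] by simp
    finally show ?thesis .
  qed
  moreover have lim: "(\<lambda>m. ennreal (2 * (1 / real p) ^ (CARD('n) * m))) \<longlonglongrightarrow> ennreal (2 * 0)"
    unfolding power_mult using p_ge_2
    by (intro tendsto_ennrealI tendsto_mult tendsto_const LIMSEQ_power_zero) (auto simp: power_less_one_iff)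
  ultimately have "emeasure M {\<lambda>i. pzero} \<le> ennreal (2 * 0)"
    by (intro LIMSEQ_le_const[OF lim]) auto
  then show ?thesis by simp
qed

lemma AE_ne_zero: "AE x in M. x \<noteq> (\<lambda>i. pzero)"
  by (rule AE_I'[of "{\<lambda>i. pzero}"]) (auto simp: emeasure_singleton_zero)

text \<open>If the character x \<mapsto> chi(\<xi>.x) were trivial almost everywhere, its kernel L would be
  conull; but a translate of L lies in the null complement, and translates cannot shrink sets.\<close>

lemma not_AE_pdot_0_eq_0:
  assumes xi: "\<xi> \<in> pball0 0" and nz: "\<xi> \<noteq> (\<lambda>i. pzero)"
  shows "\<not> (AE x in M. pdot p \<xi> x 0 = 0)"
proof
  assume AE: "AE x in M. pdot p \<xi> x 0 = 0"
  have \<xi>: "\<xi> \<in> Qpn p" using xi mem_pball0_iff by auto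
  define L where "L = {x \<in> Qpn p. pdot p \<xi> x 0 \<in> {0}}"
  define N where "N = Qpn p - L"
  have L: "L \<in> sets M" unfolding L_def sets_M by (rule pdot_0_level_set_in_sets[OF \<xi>])
  then have N: "N \<in> sets M" unfolding N_def using sets.top[of M] by auto
  have N_null: "emeasure M N = 0"
    using AE by (subst (asm) AE_iff_measurable[OF N]) (auto simp: N_def L_def)
  obtain a where a: "a \<in> Qpn p" "pdot p \<xi> a 0 \<noteq> 0" using ex_pdot_0_ne_0[OF xi nz] by blast
  have "(\<lambda>x. vadd x a) ` L \<subseteq> N"
  proof safe
    fix x assume "x \<in> L"
    then have x: "x \<in> Qpn p" "pdot p \<xi> x 0 = 0" unfolding L_def by auto
    have "pdot p \<xi> (vadd x a) 0 = pdot p \<xi> a 0"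
      using pdot_0_vadd[OF \<xi> x(1) a(1)] x(2) qmod_eq_self[of 1 "pdot p \<xi> a 0"] pdot_0_bounds[of \<xi> a]
      by simp
    then show "vadd x a \<in> N" using vadd_Qpn[OF x(1) a(1)] a(2) unfolding N_def L_def by auto
  qed
  then have "haar_outer p L \<le> haar_outer p N"
    using haar_outer_le_vadd_image[OF a(1), of L] haar_outer_mono unfolding L_def by (blast intro: order_trans)
  then have "emeasure M L = 0" using N_null emeasure_M[OF L] emeasure_M[OF N] by simp
  moreover have "Qpn p = L \<union> N" unfolding N_def L_def by auto
  ultimately have "emeasure M (Qpn p) = 0"
    using emeasure_subadditive[OF L N] N_null by simp
  then show False using emeasure_Qpn_ne_0 by simp
qed

end

section \<open>Kernels of exponential type\<close>

lemma exp_neg_le_power: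
  fixes y :: real assumes "0 < y" shows "exp (- y) \<le> (real N / y) ^ N"
proof (cases "N = 0")
  case False
  have "y / real N \<le> exp (y / real N)" using exp_ge_add_one_self[of "y / real N"] by linarith
  then have "(y / real N) ^ N \<le> exp (y / real N) ^ N" using assms by (intro power_mono) auto
  also have "\<dots> = exp y" using False by (simp add: exp_of_nat_mult[symmetric])
  finally have "1 / exp y \<le> 1 / (y / real N) ^ N" using assms False by (intro divide_left_mono) auto
  then show ?thesis by (simp add: exp_minus power_divide field_simps)
qed (use assms in simp)

lemma exp_neg_power_le:
  fixes P c :: real assumes P: "1 \<le> P" and c: "0 < c"
  shows "exp (- c * P ^ j) * P ^ (n * j) \<le> (real (2*n+2) / c) ^ (2*n+2) * (1 / P) ^ ((n+2) * j)"
proof -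
  define N where "N = 2*n+2"
  have "exp (- c * P ^ j) \<le> (real N / (c * P ^ j)) ^ N"
    using exp_neg_le_power[of "c * P ^ j" N] P c by simp
  then have "exp (- c * P ^ j) * P ^ (n * j) \<le> (real N / (c * P ^ j)) ^ N * P ^ (n * j)"
    using P by (intro mult_right_mono) auto
  also have "\<dots> = (real N / c) ^ N * (P ^ (n * j) / P ^ (N * j))"
    using P c by (simp add: power_divide power_mult_distrib power_mult[symmetric] mult.commute)
  also have "P ^ (n * j) / P ^ (N * j) = (1 / P) ^ ((n+2) * j)"
  proof -
    have "N * j = n * j + (n+2) * j" unfolding N_def by (simp add: algebra_simps)
    then have "P ^ (N * j) = P ^ (n * j) * P ^ ((n+2) * j)" by (simp add: power_add)
    then show ?thesis using P by (simp add: power_one_over)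
  qed
  finally show ?thesis unfolding N_def .
qed

locale exponential_kernel = haar_space p M
  for p :: nat and M :: "('n::finite \<Rightarrow> nat \<Rightarrow> rat) measure" +
  fixes J :: "real \<Rightarrow> real" and \<gamma> A B C :: real
  assumes J_integrable: "integrable M (\<lambda>x. J (vnorm p x))"
    and J_integral: "(\<integral>x. J (vnorm p x) \<partial>M) = 1"
    and \<gamma>_neg: "\<gamma> < 0"
    and A_pos: "A > 0" and B_pos: "B > 0" and C_pos: "C > 0"
    and J_bounds: "\<forall>x::'n \<Rightarrow> nat \<Rightarrow> rat. x \<in> Qpn p \<longrightarrow> x \<noteq> (\<lambda>i. pzero) \<longrightarrow>
              A * vnorm p x powr \<gamma> * exp (- C * vnorm p x) \<le> J (vnorm p x) \<and>
              J (vnorm p x) \<le> B * vnorm p x powr \<gamma> * exp (- C * vnorm p x)"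
begin

lemma J_pos:
  fixes x :: "'n \<Rightarrow> nat \<Rightarrow> rat"
  assumes "x \<in> Qpn p" "x \<noteq> (\<lambda>i. pzero)" shows "0 < J (vnorm p x)"
proof -
  have "0 < A * vnorm p x powr \<gamma> * exp (- C * vnorm p x)" using vnorm_pos[OF assms] A_pos by simp
  also have "\<dots> \<le> J (vnorm p x)" using J_bounds assms by blast
  finally show ?thesis .
qed

lemma J_le_if_notin_pball0:
  fixes x :: "'n \<Rightarrow> nat \<Rightarrow> rat"
  assumes x: "x \<in> Qpn p" "x \<notin> pball0 (- int j)"
  shows "J (vnorm p x) \<le> B * exp (- C * real p ^ j)"
proof -
  have v: "real p ^ j < vnorm p x" by (rule p_power_lt_vnorm_if_notin_pball0[OF x])
  moreover have "1 \<le> real p ^ j" using p_ge_2 by (intro one_le_power) simp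
  ultimately have "vnorm p x powr \<gamma> \<le> 1" using powr_mono2'[of \<gamma> 1 "vnorm p x"] \<gamma>_neg by simp
  moreover have "x \<noteq> (\<lambda>i. pzero)" using x(2) zero_in_pball0 by auto
  then have "J (vnorm p x) \<le> B * vnorm p x powr \<gamma> * exp (- C * vnorm p x)" using J_bounds x(1) by blast
  moreover have "exp (- C * vnorm p x) \<le> exp (- C * real p ^ j)" using v C_pos by simp
  ultimately have "vnorm p x powr \<gamma> * exp (- C * vnorm p x) \<le> 1 * exp (- C * real p ^ j)"
    by (intro mult_mono) auto
  then show ?thesis
    using \<open>J (vnorm p x) \<le> _\<close> B_pos mult_left_mono[of _ _ B] by (simp add: mult.assoc order_trans)
qed

lemma J_measurable [measurable]: "(\<lambda>x. J (vnorm p x)) \<in> borel_measurable M"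
  by (rule borel_measurable_integrable[OF J_integrable])

lemma integrable_complex_J: "integrable M (\<lambda>x. complex_of_real (J (vnorm p x)))"
  using J_integrable by (rule integrable_of_real)

lemma integrable_chi_J:
  assumes "\<xi> \<in> Qpn p"
  shows "integrable M (\<lambda>x. chi (pdot p \<xi> x) * complex_of_real (J (vnorm p x)))"
proof -
  have "(\<lambda>x. chi (pdot p \<xi> x)) \<in> borel_measurable M"
    unfolding M_eq by (rule chi_pdot_measurable[OF assms])
  then have "(\<lambda>x. chi (pdot p \<xi> x) * complex_of_real (J (vnorm p x))) \<in> borel_measurable M"
    by measurable
  then show ?thesis
    by (rule Bochner_Integration.integrable_bound[OF integrable_complex_J])
      (intro AE_I2, simp add: norm_mult)
qed

lemma one_minus_fourierJ_eq:
  assumes "\<xi> \<in> Qpn p"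
  shows "1 - fourierJ p J \<xi> = (\<integral>x. (1 - chi (pdot p \<xi> x)) * complex_of_real (J (vnorm p x)) \<partial>M)"
  using J_integral Bochner_Integration.integral_diff[OF integrable_complex_J integrable_chi_J[OF assms]]
  unfolding fourierJ_def M_eq[symmetric] by (simp add: algebra_simps)

lemma integrable_one_minus_chi_J:
  "\<xi> \<in> Qpn p \<Longrightarrow> integrable M (\<lambda>x. (1 - chi (pdot p \<xi> x)) * complex_of_real (J (vnorm p x)))"
  using Bochner_Integration.integrable_diff[OF integrable_complex_J integrable_chi_J]
  by (simp add: algebra_simps)

lemma fourierJ_ne_1:
  fixes \<xi> :: "'n \<Rightarrow> nat \<Rightarrow> rat"
  assumes xi: "\<xi> \<in> pball0 0" and nz: "\<xi> \<noteq> (\<lambda>i. pzero)"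
  shows "fourierJ p J \<xi> \<noteq> 1"
proof
  assume F1: "fourierJ p J \<xi> = 1"
  have \<xi>: "\<xi> \<in> Qpn p" using xi mem_pball0_iff by auto
  define h where "h = (\<lambda>x. (1 - chi (pdot p \<xi> x)) * complex_of_real (J (vnorm p x)))"
  define k where "k = (\<lambda>x. (1 - cos (2 * pi * of_rat (pdot p \<xi> x 0))) * J (vnorm p x))"
  have h_int: "integrable M h" unfolding h_def by (rule integrable_one_minus_chi_J[OF \<xi>])
  have k_Re: "k = (\<lambda>x. Re (h x))" unfolding k_def h_def by (auto simp: Re_chi)
  have k_int: "integrable M k" unfolding k_Re using h_int by simp
  have "(\<integral>x. k x \<partial>M) = Re (1 - fourierJ p J \<xi>)"
    unfolding k_Re one_minus_fourierJ_eq[OF \<xi>] h_def[symmetric] using h_int by simp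
  then have "(\<integral>x. k x \<partial>M) = 0" using F1 by simp
  moreover have "AE x in M. 0 \<le> k x"
    using AE_ne_zero by (rule AE_mp) (auto simp: k_def J_pos less_imp_le)
  ultimately have "AE x in M. k x = 0" using integral_nonneg_eq_0_iff_AE[OF k_int] by simp
  then have "AE x in M. pdot p \<xi> x 0 = 0"
    using AE_ne_zero AE_space
  proof eventually_elim
    case (elim x)
    define t where "t = (of_rat (pdot p \<xi> x 0) :: real)"
    have "cos (2 * pi * t) = 1" using elim J_pos[of x] unfolding k_def t_def by simp
    then obtain n :: int where n: "t = of_int n" using cos_one_2pi_int by auto
    moreover have "0 \<le> t" "t < 1" unfolding t_def using pdot_0_bounds[of \<xi> x]
      by (simp_all add: zero_le_of_rat_iff of_rat_less_1_iff)
    ultimately have "n = 0" by simp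
    then show ?case using n unfolding t_def by simp
  qed
  then show False using not_AE_pdot_0_eq_0[OF xi nz] by contradiction
qed

lemma norm_one_minus_fourierJ_le_tail:
  fixes \<xi> :: "'n \<Rightarrow> nat \<Rightarrow> rat"
  assumes xi: "\<xi> \<in> pball0 (int m)"
  shows "ennreal (norm (1 - fourierJ p J \<xi>))
    \<le> (\<integral>\<^sup>+x. ennreal (2 * indicator (Qpn p - pball0 (- int m)) x * J (vnorm p x)) \<partial>M)"
proof -
  have \<xi>: "\<xi> \<in> Qpn p" using xi mem_pball0_iff by auto
  have "ennreal (norm (1 - fourierJ p J \<xi>))
      \<le> (\<integral>\<^sup>+x. ennreal (norm ((1 - chi (pdot p \<xi> x)) * complex_of_real (J (vnorm p x)))) \<partial>M)"
    unfolding one_minus_fourierJ_eq[OF \<xi>]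
    by (rule integral_norm_bound_ennreal[OF integrable_one_minus_chi_J[OF \<xi>]])
  also have "\<dots> \<le> (\<integral>\<^sup>+x. ennreal (2 * indicator (Qpn p - pball0 (- int m)) x * J (vnorm p x)) \<partial>M)"
  proof (rule nn_integral_mono)
    fix x assume "x \<in> space M"
    then have x: "x \<in> Qpn p" by simp
    show "ennreal (norm ((1 - chi (pdot p \<xi> x)) * complex_of_real (J (vnorm p x))))
      \<le> ennreal (2 * indicator (Qpn p - pball0 (- int m)) x * J (vnorm p x))"
    proof (cases "x \<in> pball0 (- int m)")
      case True
      then show ?thesis using pdot_0_eq_0_if_dual[OF xi True] by (simp add: chi_eq_1)
    next
      case False
      then have J: "0 < J (vnorm p x)" using J_pos x zero_in_pball0 by metis
      have "norm (1 - chi (pdot p \<xi> x)) \<le> 2"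
        using norm_triangle_ineq4[of 1 "chi (pdot p \<xi> x)"] by simp
      then show ?thesis using False x J by (intro ennreal_leI) (simp add: norm_mult)
    qed
  qed
  finally show ?thesis .
qed

lemma tail_le_shells:
  fixes x :: "'n \<Rightarrow> nat \<Rightarrow> rat"
  assumes x: "x \<in> Qpn p"
  shows "ennreal (indicator (Qpn p - pball0 (- int m)) x * J (vnorm p x))
    \<le> (\<Sum>k. ennreal (B * exp (- C * real p ^ (k + m))) * indicator (pball0 (- int (k + m + 1))) x)"
proof (cases "x \<in> pball0 (- int m)")
  case False
  have "\<exists>K. x \<in> pball0 (- int K)" using x Qpn_eq_Union_pball0 by blast
  define K where "K = (LEAST K. x \<in> pball0 (- int K))"
  have K: "x \<in> pball0 (- int K)" unfolding K_def using \<open>\<exists>K. _\<close> by (rule LeastI_ex)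
  have "m < K" using K False pball0_antimono[of "- int m" "- int K"] by (cases "m < K") auto
  define k where "k = K - m - 1"
  have Kk: "K = k + m + 1" "k + m < K" unfolding k_def using \<open>m < K\<close> by auto
  have "x \<notin> pball0 (- int (k + m))" using not_less_Least[OF Kk(2)[unfolded K_def]] .
  then have "ennreal (indicator (Qpn p - pball0 (- int m)) x * J (vnorm p x))
      \<le> ennreal (B * exp (- C * real p ^ (k + m))) * indicator (pball0 (- int (k + m + 1))) x"
    using J_le_if_notin_pball0[OF x] False x K Kk(1) by (simp add: ennreal_leI)
  also have "\<dots> \<le> (\<Sum>k. ennreal (B * exp (- C * real p ^ (k + m))) * indicator (pball0 (- int (k + m + 1))) x)"
    using sum_le_suminf[OF summableI, of "{k}"] by simp
  finally show ?thesis .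
qed simp

text \<open>The constant comes from exp(-y) \<le> (N/y)^N with N = 2n + 2, which beats the growth
  p^(n k) of the volumes of the shells.\<close>

definition tail_const :: real where
  "tail_const = 2 * B * real p ^ CARD('n) * (real (2 * CARD('n) + 2) / C) ^ (2 * CARD('n) + 2)"

lemma tail_const_pos: "0 < tail_const"
  unfolding tail_const_def using B_pos C_pos by simp

lemma shell_term_le:
  "B * exp (- C * real p ^ (k + m)) * (2 * real p ^ (CARD('n) * (k + m + 1)))
    \<le> tail_const * (1 / real p) ^ ((CARD('n) + 1) * m + k)"
proof -
  define n where "n = CARD('n)"
  define j where "j = k + m"
  have "B * exp (- C * real p ^ j) * (2 * real p ^ (n * (j + 1)))
      = 2 * B * real p ^ n * (exp (- C * real p ^ j) * real p ^ (n * j))"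
    by (simp add: power_add algebra_simps)
  also have "\<dots> \<le> 2 * B * real p ^ n * ((real (2*n+2) / C) ^ (2*n+2) * (1 / real p) ^ ((n+2) * j))"
    using exp_neg_power_le[of "real p" C j n] p_ge_2 B_pos C_pos by (intro mult_left_mono) auto
  also have "\<dots> \<le> 2 * B * real p ^ n * ((real (2*n+2) / C) ^ (2*n+2) * (1 / real p) ^ ((n+1) * m + k))"
    using p_ge_2 B_pos C_pos unfolding j_def
    by (intro mult_left_mono power_decreasing) (auto simp: algebra_simps)
  finally show ?thesis unfolding tail_const_def n_def j_def by (simp add: mult.assoc)
qed

lemma tail_nn_integral_le:
  "(\<integral>\<^sup>+x. ennreal (indicator (Qpn p - pball0 (- int m)) x * J (vnorm p x)) \<partial>M)
    \<le> ennreal (2 * tail_const * (1 / real p) ^ ((CARD('n) + 1) * m))"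
proof -
  define r where "r = 1 / real p"
  have r: "0 < r" "r \<le> 1/2" unfolding r_def using p_ge_2 by (auto simp: field_simps)
  define c where "c = (\<lambda>k. B * exp (- C * real p ^ (k + m)))"
  have "(\<integral>\<^sup>+x. ennreal (indicator (Qpn p - pball0 (- int m)) x * J (vnorm p x)) \<partial>M)
      \<le> (\<integral>\<^sup>+x. (\<Sum>k. ennreal (c k) * indicator (pball0 (- int (k + m + 1))) x) \<partial>M)"
    unfolding c_def by (intro nn_integral_mono tail_le_shells) simp
  also have "\<dots> = (\<Sum>k. ennreal (c k) * emeasure M (pball0 (- int (k + m + 1))))"
    by (simp add: nn_integral_suminf nn_integral_cmult_indicator)
  also have "\<dots> \<le> (\<Sum>k. ennreal (tail_const * r ^ ((CARD('n) + 1) * m) * r ^ k))"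
  proof (intro suminf_le summableI)
    fix k
    have "ennreal (c k) * emeasure M (pball0 (- int (k + m + 1)))
        \<le> ennreal (c k) * ennreal (2 * real p ^ (CARD('n) * (k + m + 1)))"
      by (intro mult_left_mono emeasure_pball0_neg_le) simp
    also have "\<dots> \<le> ennreal (tail_const * r ^ ((CARD('n) + 1) * m) * r ^ k)"
      using shell_term_le[of k m] B_pos unfolding c_def r_def
      by (simp add: ennreal_mult[symmetric] power_add mult.assoc ennreal_leI)
    finally show "ennreal (c k) * emeasure M (pball0 (- int (k + m + 1)))
        \<le> ennreal (tail_const * r ^ ((CARD('n) + 1) * m) * r ^ k)" .
  qed
  also have "\<dots> = ennreal (tail_const * r ^ ((CARD('n) + 1) * m) * (1 / (1 - r)))"
    using r tail_const_pos
    by (simp add: suminf_ennreal2 summable_mult summable_geometric suminf_mult suminf_geometric[symmetric])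
  also have "\<dots> \<le> ennreal (2 * tail_const * (1 / real p) ^ ((CARD('n) + 1) * m))"
    using r tail_const_pos mult_left_mono[of "1 / (1 - r)" 2 "tail_const * r ^ ((CARD('n) + 1) * m)"]
    unfolding r_def by (intro ennreal_leI) (simp add: field_simps)
  finally show ?thesis .
qed

lemma norm_one_minus_fourierJ_le:
  fixes \<xi> :: "'n \<Rightarrow> nat \<Rightarrow> rat"
  assumes "\<xi> \<in> pball0 (int m)"
  shows "norm (1 - fourierJ p J \<xi>) \<le> 4 * tail_const * (1 / real p) ^ ((CARD('n) + 1) * m)"
proof -
  have "ennreal (norm (1 - fourierJ p J \<xi>))
      \<le> (\<integral>\<^sup>+x. ennreal 2 * ennreal (indicator (Qpn p - pball0 (- int m)) x * J (vnorm p x)) \<partial>M)"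
    using norm_one_minus_fourierJ_le_tail[OF assms] by (simp add: ennreal_mult' mult.assoc)
  also have "\<dots> = ennreal 2 * (\<integral>\<^sup>+x. ennreal (indicator (Qpn p - pball0 (- int m)) x * J (vnorm p x)) \<partial>M)"
    by (rule nn_integral_cmult) measurable
  also have "\<dots> \<le> ennreal 2 * ennreal (2 * tail_const * (1 / real p) ^ ((CARD('n) + 1) * m))"
    by (intro mult_left_mono tail_nn_integral_le) simp
  also have "\<dots> = ennreal (4 * tail_const * (1 / real p) ^ ((CARD('n) + 1) * m))"
    by (subst ennreal_mult'[symmetric]) (simp_all add: mult.assoc)
  finally show ?thesis using tail_const_pos by (subst (asm) ennreal_le_iff) auto
qed

lemma nn_integral_norm_inverse_ge:
  "ennreal (real p ^ m / (4 * tail_const)) * emeasure M (pball0 0)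
    \<le> (\<integral>\<^sup>+\<xi>. norm (indicator (pball0 0) \<xi> / (1 - fourierJ p J \<xi>) :: complex) \<partial>M)"
proof -
  define K where "K = 4 * tail_const * (1 / real p) ^ ((CARD('n) + 1) * m)"
  have K: "0 < K" unfolding K_def using tail_const_pos by simp
  have "AE \<xi> in M. ennreal (1 / K) * indicator (pball0 (int m)) \<xi>
      \<le> norm (indicator (pball0 0) \<xi> / (1 - fourierJ p J \<xi>) :: complex)"
    using AE_ne_zero
  proof eventually_elim
    case (elim \<xi>)
    show ?case
    proof (cases "\<xi> \<in> pball0 (int m)")
      case True
      then have \<xi>0: "\<xi> \<in> pball0 0" using pball0_antimono[of 0 "int m"] by auto
      have "0 < norm (1 - fourierJ p J \<xi>)" using fourierJ_ne_1[OF \<xi>0 elim] by simp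
      moreover have "norm (1 - fourierJ p J \<xi>) \<le> K"
        using norm_one_minus_fourierJ_le[OF True] unfolding K_def .
      ultimately have "1 / K \<le> 1 / norm (1 - fourierJ p J \<xi>)" using K by (intro divide_left_mono) auto
      then show ?thesis using True \<xi>0 by (simp add: norm_divide ennreal_leI)
    qed simp
  qed
  then have integral_ge: "ennreal (1 / K) * emeasure M (pball0 (int m))
      \<le> (\<integral>\<^sup>+\<xi>. norm (indicator (pball0 0) \<xi> / (1 - fourierJ p J \<xi>) :: complex) \<partial>M)"
    by (subst nn_integral_cmult_indicator[symmetric]) (auto intro: nn_integral_mono_AE)
  have "real p ^ m / (4 * tail_const) = 1 / K * (1 / real p) ^ (CARD('n) * m)"
    unfolding K_def by (simp add: power_add power_one_over algebra_simps)
  then have "ennreal (real p ^ m / (4 * tail_const)) = ennreal (1 / K) * ennreal ((1 / real p) ^ (CARD('n) * m))"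
    using K by (simp only:) (intro ennreal_mult; simp)
  then have "ennreal (real p ^ m / (4 * tail_const)) * emeasure M (pball0 0)
      = ennreal (1 / K) * (ennreal ((1 / real p) ^ (CARD('n) * m)) * emeasure M (pball0 0))"
    by (simp only: mult.assoc)
  also have "\<dots> \<le> ennreal (1 / K) * emeasure M (pball0 (int m))"
    by (intro mult_left_mono emeasure_pball0_ge) simp
  finally show ?thesis using integral_ge by (rule order_trans)
qed

theorem not_integrable_inverse_one_minus_fourierJ:
  "\<not> integrable M (\<lambda>\<xi>. indicator {\<eta> \<in> Qpn p. vnorm p \<eta> \<le> 1} \<xi> / (1 - fourierJ p J \<xi>) :: complex)"
proof
  assume "integrable M (\<lambda>\<xi>. indicator {\<eta> \<in> Qpn p. vnorm p \<eta> \<le> 1} \<xi> / (1 - fourierJ p J \<xi>) :: complex)"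
  then have "(\<integral>\<^sup>+\<xi>. norm (indicator (pball0 0) \<xi> / (1 - fourierJ p J \<xi>) :: complex) \<partial>M) < \<infinity>"
    unfolding pball0_0_eq by (simp add: integrable_iff_bounded)
  then obtain I where I: "(\<integral>\<^sup>+\<xi>. norm (indicator (pball0 0) \<xi> / (1 - fourierJ p J \<xi>) :: complex) \<partial>M) = ennreal I"
    "0 \<le> I"
    using less_top_ennreal by auto
  obtain s where s: "emeasure M (pball0 0) = ennreal s" "0 \<le> s"
    using emeasure_pball0_0_finite less_top_ennreal by auto
  then have "0 < s" using emeasure_pball0_0_ne_0 by (cases "s = 0") auto
  obtain m where m: "I * (4 * tail_const) / s < real p ^ m"
    using real_arch_pow[of "real p"] p_ge_2 by auto
  have "ennreal (real p ^ m / (4 * tail_const) * s) = ennreal (real p ^ m / (4 * tail_const)) * ennreal s"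
    using s tail_const_pos by (intro ennreal_mult) auto
  then have "ennreal (real p ^ m / (4 * tail_const) * s) \<le> ennreal I"
    using nn_integral_norm_inverse_ge[of m] s I by simp
  then have "real p ^ m / (4 * tail_const) * s \<le> I" using I(2) by simp
  then show False using m \<open>0 < s\<close> tail_const_pos by (simp add: field_simps)
qed

end

lemma emeasure_space_ne_0_if_integral_ne_0:
  fixes f :: "'a \<Rightarrow> 'b::{banach, second_countable_topology}"
  assumes "integral\<^sup>L M f \<noteq> 0"
  shows "emeasure M (space M) \<noteq> 0"
proof
  assume "emeasure M (space M) = 0"
  then have "AE x in M. f x = 0" by (intro AE_I'[of "space M"]) auto
  then show False using assms integral_eq_zero_AE by blast
qed

theorem lemma2:
  fixes p :: nat and J :: "real \<Rightarrow> real" and \<gamma> :: real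
  assumes "prime p"
    and "continuous_on {0<..} J"
    and "\<forall>t>0. J t \<ge> 0"
    and "integrable (haar p) (\<lambda>x::'n::finite \<Rightarrow> nat \<Rightarrow> rat. J (vnorm p x))"
    and "(\<integral>x. J (vnorm p (x::'n \<Rightarrow> nat \<Rightarrow> rat)) \<partial>haar p) = 1"
    and "- real CARD('n) < \<gamma>" and "\<gamma> < 0"
    and "\<exists>A B C1. A > 0 \<and> B > 0 \<and> C1 > 0 \<and>
           (\<forall>x::'n \<Rightarrow> nat \<Rightarrow> rat. x \<in> Qpn p \<longrightarrow> x \<noteq> (\<lambda>i. pzero) \<longrightarrow>
              A * vnorm p x powr \<gamma> * exp (- C1 * vnorm p x) \<le> J (vnorm p x) \<and>
              J (vnorm p x) \<le> B * vnorm p x powr \<gamma> * exp (- C1 * vnorm p x))"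
  shows "\<not> integrable (haar p)
            (\<lambda>\<xi>::'n \<Rightarrow> nat \<Rightarrow> rat. indicator {\<eta> \<in> Qpn p. vnorm p \<eta> \<le> 1} \<xi>
                                    / (1 - fourierJ p J \<xi>) :: complex)"
proof -
  interpret padic_numbers p
    using prime_ge_2_nat[OF assms(1)] by unfold_locales
  obtain A B C where bounds: "A > 0" "B > 0" "C > 0"
    "\<forall>x::'n \<Rightarrow> nat \<Rightarrow> rat. x \<in> Qpn p \<longrightarrow> x \<noteq> (\<lambda>i. pzero) \<longrightarrow>
       A * vnorm p x powr \<gamma> * exp (- C * vnorm p x) \<le> J (vnorm p x) \<and>
       J (vnorm p x) \<le> B * vnorm p x powr \<gamma> * exp (- C * vnorm p x)"
    using assms(8) by blast
  have "emeasure (haar p) (Qpn p :: ('n \<Rightarrow> nat \<Rightarrow> rat) set) \<noteq> 0"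
    using emeasure_space_ne_0_if_integral_ne_0[of "haar p" "\<lambda>x::'n \<Rightarrow> nat \<Rightarrow> rat. J (vnorm p x)"]
      assms(5) unfolding space_haar by simp
  then interpret exponential_kernel p "haar p :: ('n \<Rightarrow> nat \<Rightarrow> rat) measure" J \<gamma> A B C
    using assms(4,5,7) bounds by unfold_locales auto
  show ?thesis by (rule not_integrable_inverse_one_minus_fourierJ)
qed

end
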